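(* Let $\phi$ be a faithful normal state on a von Neumann algebra $\mathcal{M}$, identified with $\pi_\phi(\mathcal{M})$ acting on the GNS space $\mathcal{H}_\phi$ with cyclic and separating unit vector $\zeta_\phi$, $\phi(x)=\langle\zeta_\phi,x\zeta_\phi\rangle$. Let $\tau\in P^{1/2}_\phi(\mathcal{M})$. Then there exists a positive map $\tau':\mathcal{M}'\to\mathcal{M}'$ such that $$\langle\tau'(y')\zeta_\phi,x\zeta_\phi\rangle=\langle y'\zeta_\phi,\tau(x)\zeta_\phi\rangle\quad\text{for all }x\in\mathcal{M},\ y'\in\mathcal{M}',$$ and $\tau'\in P^{1/2}_\phi(\mathcal{M}')$. Further, for two such maps $\tau_1,\tau_2\in P^{1/2}_\phi(\mathcal{M})$ with corresponding $\tau_1',\tau_2'$, for all $x\in\mathcal{M}$ and $y_1',y_2'\in\mathcal{M}'$, $$|\psi_{y_1',y_2'}(\tau_1(x)-\tau_2(x))|\le\|(\tau_1'-\tau_2')((y_2')^*y_1')\zeta_\phi\|\,\|x\zeta_\phi\|\le\|(\tau_1'-\tau_2')((y_2')^*y_1')\zeta_\phi\|\,\|x\|,$$ where $\psi_{y_1',y_2'}(x)=\langle y_1'\zeta_\phi,xy_2'\zeta_\phi\rangle$.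
   Context: $\mathcal{M}'$ is the commutant of $\mathcal{M}$ in $\mathcal{B}(\mathcal{H}_\phi)$. For $\mathcal{A}\in\{\mathcal{M},\mathcal{M}'\}$, write $\phi(a)=\langle\zeta_\phi,a\zeta_\phi\rangle$ for $a\in\mathcal{A}$; $P^{1/2}_\phi(\mathcal{A})$ denotes the set of positive maps $\tau:\mathcal{A}\to\mathcal{A}$ with $\phi(\tau(a))\le\phi(a)$ for $a\ge0$, $\tau(1)\le1$, and $\phi(\tau(a)^*\tau(a))\le\phi(a^*a)$ for all $a\in\mathcal{A}$. *)

theory Defs
  imports "HOL-Analysis.Analysis"
begin

text \<open>A complex Hilbert space: a complete real inner product space with a complex
scalar multiplication extending the real one, and a complex inner product
(conjugate-linear in the first, linear in the second argument) whose real part is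
the real inner product (so that the norm is the Hilbert space norm).\<close>

class complex_hilbert = real_inner + complete_space +
  fixes scaleC :: "complex \<Rightarrow> 'a \<Rightarrow> 'a"
    and cinner :: "'a \<Rightarrow> 'a \<Rightarrow> complex"
  assumes scaleC_add_right: "scaleC c (x + y) = scaleC c x + scaleC c y"
    and scaleC_add_left: "scaleC (c + d) x = scaleC c x + scaleC d x"
    and scaleC_scaleC: "scaleC c (scaleC d x) = scaleC (c * d) x"
    and scaleC_of_real: "scaleC (complex_of_real r) x = scaleR r x"
    and cinner_commute: "cinner y x = cnj (cinner x y)"
    and cinner_add_right: "cinner x (y + z) = cinner x y + cinner x z"
    and cinner_scaleC_right: "cinner x (scaleC c y) = c * cinner x y"
    and Re_cinner: "Re (cinner x y) = inner x y"

definition bounded_op :: "('h::complex_hilbert \<Rightarrow> 'h) \<Rightarrow> bool" where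
  "bounded_op A \<longleftrightarrow> (\<forall>x y. A (x + y) = A x + A y) \<and> (\<forall>c x. A (scaleC c x) = scaleC c (A x))
     \<and> (\<exists>K. \<forall>x. norm (A x) \<le> K * norm x)"

definition adj :: "('h::complex_hilbert \<Rightarrow> 'h) \<Rightarrow> ('h \<Rightarrow> 'h)" where
  "adj A = (SOME B. \<forall>x y. cinner (A x) y = cinner x (B y))"

definition commutant :: "('h::complex_hilbert \<Rightarrow> 'h) set \<Rightarrow> ('h \<Rightarrow> 'h) set" where
  "commutant S = {B. bounded_op B \<and> (\<forall>A\<in>S. A \<circ> B = B \<circ> A)}"

text \<open>A von Neumann algebra: a self-adjoint set of bounded operators equal to its
bicommutant (equivalently a unital weakly closed *-subalgebra of B(H)).\<close>
definition von_neumann_algebra :: "('h::complex_hilbert \<Rightarrow> 'h) set \<Rightarrow> bool" where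
  "von_neumann_algebra M \<longleftrightarrow> (\<forall>A\<in>M. bounded_op A) \<and> (\<forall>A\<in>M. adj A \<in> M)
     \<and> commutant (commutant M) = M"

definition pos_op :: "('h::complex_hilbert \<Rightarrow> 'h) \<Rightarrow> bool" where
  "pos_op a \<longleftrightarrow> bounded_op a \<and> (\<forall>v. Im (cinner v (a v)) = 0 \<and> Re (cinner v (a v)) \<ge> 0)"

definition op_le :: "('h::complex_hilbert \<Rightarrow> 'h) \<Rightarrow> ('h \<Rightarrow> 'h) \<Rightarrow> bool" where
  "op_le a b \<longleftrightarrow> pos_op (\<lambda>v. b v - a v)"

definition vstate :: "'h::complex_hilbert \<Rightarrow> ('h \<Rightarrow> 'h) \<Rightarrow> complex" where
  "vstate \<zeta> a = cinner \<zeta> (a \<zeta>)"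

definition P_half :: "'h::complex_hilbert \<Rightarrow> ('h \<Rightarrow> 'h) set \<Rightarrow> (('h \<Rightarrow> 'h) \<Rightarrow> ('h \<Rightarrow> 'h)) \<Rightarrow> bool" where
  "P_half \<zeta> A \<tau> \<longleftrightarrow>
     (\<forall>a\<in>A. \<tau> a \<in> A) \<and>
     (\<forall>a\<in>A. \<forall>b\<in>A. \<tau> (\<lambda>v. a v + b v) = (\<lambda>v. \<tau> a v + \<tau> b v)) \<and>
     (\<forall>a\<in>A. \<forall>c. \<tau> (\<lambda>v. scaleC c (a v)) = (\<lambda>v. scaleC c (\<tau> a v))) \<and>
     (\<forall>a\<in>A. pos_op a \<longrightarrow> pos_op (\<tau> a)) \<and>
     (\<forall>a\<in>A. pos_op a \<longrightarrow> Re (vstate \<zeta> (\<tau> a)) \<le> Re (vstate \<zeta> a)) \<and>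
     op_le (\<tau> id) id \<and>
     (\<forall>a\<in>A. Re (vstate \<zeta> (adj (\<tau> a) \<circ> \<tau> a)) \<le> Re (vstate \<zeta> (adj a \<circ> a)))"

end

theory Submission
  imports Defs
begin

text \<open>For positive \<open>y \<in> M'\<close> the sesquilinear form \<open>(a\<zeta>, b\<zeta>) \<mapsto> \<langle>y\<zeta>, \<tau>(a\<^sup>* b)\<zeta>\<rangle>\<close> on
the dense subspace \<open>M\<zeta>\<close> is positive and bounded by \<open>\<parallel>y\<parallel> \<parallel>a\<zeta>\<parallel> \<parallel>b\<zeta>\<parallel>\<close>: the operators
\<open>\<tau>(a\<^sup>* a)\<close> and \<open>y\<close> are positive and commute, and \<open>\<phi>(\<tau>(a\<^sup>* a)) \<le> \<phi>(a\<^sup>* a)\<close>. Its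
representing operator \<open>\<tau>'(y)\<close> commutes with \<open>M\<close>, hence lies in \<open>M'\<close>, and the choice \<open>a = 1\<close>
gives the duality relation; arbitrary \<open>y \<in> M'\<close> are linear combinations of positive ones.
Positivity of \<open>\<tau>'\<close> is positivity of the form, \<open>\<tau>'(1) \<le> 1\<close> is its bound at \<open>y = 1\<close>,
\<open>\<phi> \<circ> \<tau>' \<le> \<phi>\<close> follows from \<open>\<tau>(1) \<le> 1\<close>, and \<open>\<parallel>\<tau>'(y)\<zeta>\<parallel> \<le> \<parallel>y\<zeta>\<parallel>\<close> is dual to
\<open>\<parallel>\<tau>(x)\<zeta>\<parallel> \<le> \<parallel>x\<zeta>\<parallel>\<close>. For the estimate, \<open>y\<^sub>2\<close> commutes with \<open>\<tau>\<^sub>i(x)\<close>, so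
\<open>\<psi>(\<tau>\<^sub>1(x) - \<tau>\<^sub>2(x)) = \<langle>(y\<^sub>2\<^sup>* y\<^sub>1)\<zeta>, (\<tau>\<^sub>1 - \<tau>\<^sub>2)(x)\<zeta>\<rangle> = \<langle>(\<tau>\<^sub>1' - \<tau>\<^sub>2')(y\<^sub>2\<^sup>* y\<^sub>1)\<zeta>, x\<zeta>\<rangle>\<close>,
and Cauchy-Schwarz finishes.\<close>

lemma scaleC_one [simp]: "scaleC 1 x = x"
  using scaleC_of_real[of 1 x] by simp

lemma scaleC_zero_left [simp]: "scaleC 0 x = 0"
  using scaleC_of_real[of 0 x] by simp

lemma scaleC_zero_right [simp]: "scaleC c 0 = 0"
  using scaleC_add_right[of c 0 0] by simp

lemma scaleC_minus_left: "scaleC (- c) x = - scaleC c x"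
  using scaleC_add_left[of c "-c" x] by (simp add: eq_neg_iff_add_eq_0 add.commute)

lemma scaleC_minus_right: "scaleC c (- x) = - scaleC c x"
  using scaleC_add_right[of c x "-x"] by (simp add: eq_neg_iff_add_eq_0 add.commute)

lemma scaleC_diff_right: "scaleC c (x - y) = scaleC c x - scaleC c y"
  using scaleC_add_right[of c x "-y"] scaleC_minus_right by simp

lemma scaleC_minus1: "scaleC (-1) x = - x"
  by (simp add: scaleC_minus_left)

lemma scaleR_eq_scaleC: "scaleR r (x::'a::complex_hilbert) = scaleC (complex_of_real r) x"
  by (simp add: scaleC_of_real)

lemma cinner_add_left: "cinner (x + y) z = cinner x z + cinner y z"
  by (metis cinner_commute cinner_add_right complex_cnj_add)

lemma cinner_scaleC_left: "cinner (scaleC c x) y = cnj c * cinner x y"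
  by (metis cinner_commute cinner_scaleC_right complex_cnj_mult complex_cnj_cnj)

lemma cinner_zero_right [simp]: "cinner x 0 = 0"
  using cinner_add_right[of x 0 0] by simp

lemma cinner_zero_left [simp]: "cinner 0 x = 0"
  using cinner_add_left[of 0 0 x] by simp

lemma cinner_minus_right: "cinner x (- y) = - cinner x y"
  using cinner_add_right[of x y "-y"] by (simp add: eq_neg_iff_add_eq_0 add.commute)

lemma cinner_minus_left: "cinner (- x) y = - cinner x y"
  using cinner_add_left[of x "-x" y] by (simp add: eq_neg_iff_add_eq_0 add.commute)

lemma cinner_diff_right: "cinner x (y - z) = cinner x y - cinner x z"
  using cinner_add_right[of x y "-z"] cinner_minus_right by simp

lemma cinner_diff_left: "cinner (x - y) z = cinner x z - cinner y z"
  using cinner_add_left[of x "-y" z] cinner_minus_left by simp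

lemma cinner_self: "cinner x x = complex_of_real ((norm x)\<^sup>2)"
proof -
  have "Im (cinner x x) = 0"
    using cinner_commute[of x x] by (auto simp: complex_eq_iff)
  moreover have "Re (cinner x x) = (norm x)\<^sup>2"
    by (simp add: Re_cinner power2_norm_eq_inner)
  ultimately show ?thesis by (simp add: complex_eq_iff)
qed

lemma Re_cinner_self: "Re (cinner x x) = (norm x)\<^sup>2"
  by (simp add: cinner_self)

lemma cinner_ext: "(\<And>x. cinner x u = cinner x v) \<Longrightarrow> u = v"
  using cinner_self[of "u - v"] by (simp add: cinner_diff_left cinner_diff_right)

lemma cnj_mult_self:
  "cnj z * z = complex_of_real ((cmod z)\<^sup>2)" "z * cnj z = complex_of_real ((cmod z)\<^sup>2)"
  by (metis complex_norm_square mult.commute) (metis complex_norm_square)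

lemma norm_scaleC: "norm (scaleC c x) = cmod c * norm x"
proof -
  have "complex_of_real ((norm (scaleC c x))\<^sup>2) = cinner (scaleC c x) (scaleC c x)"
    by (simp add: cinner_self)
  also have "\<dots> = cnj c * c * cinner x x"
    by (simp add: cinner_scaleC_left cinner_scaleC_right)
  also have "\<dots> = complex_of_real ((cmod c * norm x)\<^sup>2)"
    by (simp add: cnj_mult_self cinner_self power_mult_distrib)
  finally have "(norm (scaleC c x))\<^sup>2 = (cmod c * norm x)\<^sup>2"
    using of_real_eq_iff by blast
  then show ?thesis by (simp add: power2_eq_iff_nonneg)
qed

lemma cmod_cinner_le: "cmod (cinner x y) \<le> norm x * norm y"
proof (cases "cinner x y = 0")
  case True then show ?thesis by simp
next
  case False
  define c where "c = cnj (cinner x y) / complex_of_real (cmod (cinner x y))"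
  have "cmod c = 1" using False by (simp add: c_def norm_divide)
  have "complex_of_real (cmod (cinner x y)) = c * cinner x y"
    using False cnj_mult_self(1)[of "cinner x y"] by (simp add: c_def field_simps power2_eq_square)
  then have "cmod (cinner x y) = inner x (scaleC c y)"
    by (metis Re_complex_of_real Re_cinner cinner_scaleC_right)
  also have "\<dots> \<le> norm x * norm (scaleC c y)" by (rule norm_cauchy_schwarz)
  also have "\<dots> = norm x * norm y" by (simp add: norm_scaleC \<open>cmod c = 1\<close>)
  finally show ?thesis .
qed

lemma bounded_bilinear_cinner: "bounded_bilinear (cinner :: 'a::complex_hilbert \<Rightarrow> _)"
proof (rule bounded_bilinear.intro)
  fix a a' b b' :: "'a::complex_hilbert" and r :: real
  show "cinner (a + a') b = cinner a b + cinner a' b" by (rule cinner_add_left)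
  show "cinner a (b + b') = cinner a b + cinner a b'" by (rule cinner_add_right)
  show "cinner (r *\<^sub>R a) b = r *\<^sub>R cinner a b"
    by (simp add: scaleR_eq_scaleC cinner_scaleC_left scaleR_conv_of_real)
  show "cinner a (r *\<^sub>R b) = r *\<^sub>R cinner a b"
    by (simp add: scaleR_eq_scaleC cinner_scaleC_right scaleR_conv_of_real)
  show "\<exists>K. \<forall>a b. norm (cinner a b) \<le> norm a * norm b * K"
    by (rule exI[of _ 1]) (simp add: cmod_cinner_le)
qed

lemma continuous_on_cinner:
  "continuous_on UNIV f \<Longrightarrow> continuous_on UNIV g \<Longrightarrow> continuous_on UNIV (\<lambda>x. cinner (f x) (g x))"
  by (rule bounded_bilinear.continuous_on[OF bounded_bilinear_cinner])

lemma continuous_on_cinner_right: "continuous_on UNIV (\<lambda>x. cinner w x)"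
  by (intro continuous_on_cinner continuous_intros)

lemma continuous_on_scaleC: "continuous_on UNIV (\<lambda>v::'h::complex_hilbert. scaleC c v)"
proof -
  have "bounded_linear (\<lambda>v::'h. scaleC c v)"
    by (rule bounded_linear_intro[where K="cmod c"])
       (simp_all add: scaleC_add_right scaleR_eq_scaleC scaleC_scaleC mult.commute norm_scaleC)
  then show ?thesis by (rule linear_continuous_on)
qed

lemma norm_diff_parallelogram:
  "(norm (x - y))\<^sup>2 = 2 * (norm x)\<^sup>2 + 2 * (norm y)\<^sup>2 - (norm (x + y))\<^sup>2"
  for x y :: "'a::real_inner"
  using dot_norm[of x y] dot_norm_neg[of x y] by simp

lemma dense_continuous_eq:
  fixes f g :: "'a::topological_space \<Rightarrow> 'b::t2_space"
  assumes "closure D = UNIV" "continuous_on UNIV f" "continuous_on UNIV g"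
    and "\<And>x. x \<in> D \<Longrightarrow> f x = g x"
  shows "f x = g x"
proof -
  have "closure D \<subseteq> {x. f x = g x}"
    using assms(2-4) by (intro closure_minimal) (auto intro: closed_Collect_eq)
  then show ?thesis using assms(1) by blast
qed

lemma dense_continuous_le:
  fixes f g :: "'a::topological_space \<Rightarrow> real"
  assumes "closure D = UNIV" "continuous_on UNIV f" "continuous_on UNIV g"
    and "\<And>x. x \<in> D \<Longrightarrow> f x \<le> g x"
  shows "f x \<le> g x"
proof -
  have "closure D \<subseteq> {x. f x \<le> g x}"
    using assms(2-4) by (intro closure_minimal) (auto intro: closed_Collect_le)
  then show ?thesis using assms(1) by blast
qed

lemma dense_cinner_eq_imp_eq:
  assumes "closure D = UNIV" "\<And>v. v \<in> D \<Longrightarrow> cinner w v = cinner w' v"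
  shows "w = w'"
proof -
  have "cinner w v = cinner w' v" for v
    by (rule dense_continuous_eq[OF assms(1) continuous_on_cinner_right
          continuous_on_cinner_right assms(2)])
  then show ?thesis by (metis cinner_commute cinner_ext)
qed

lemma dense_cinner_bound_imp_norm_le:
  assumes "closure D = UNIV" "C \<ge> 0" "\<And>v. v \<in> D \<Longrightarrow> cmod (cinner w v) \<le> C * norm v"
  shows "norm w \<le> C"
proof -
  have "cmod (cinner w v) \<le> C * norm v" for v
    by (rule dense_continuous_le[OF assms(1) _ _ assms(3)])
       (intro continuous_intros continuous_on_cinner_right)+
  from this[of w] have "(norm w)\<^sup>2 \<le> C * norm w" by (simp add: cinner_self norm_power)
  then show ?thesis
    using assms(2) by (cases "norm w = 0") (auto simp: power2_eq_square mult_le_cancel_right)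
qed

section \<open>The Riesz representation theorem\<close>

text \<open>The representing vector is obtained as the limit of near-maximisers of \<open>Re \<circ> f\<close> on the
unit ball; the parallelogram law makes every such sequence Cauchy.\<close>

lemma near_maximizers_Cauchy:
  fixes f :: "'a::complex_hilbert \<Rightarrow> complex" and xs :: "nat \<Rightarrow> 'a"
  assumes add: "\<And>x y. f (x + y) = f x + f y"
    and bound: "\<And>z. Re (f z) \<le> s * norm z" and s: "s > 0"
    and unit: "\<And>n. norm (xs n) \<le> 1" and near: "\<And>n. s - 1 / (real n + 1) < Re (f (xs n))"
  shows "Cauchy xs"
proof -
  have key: "(norm (xs n - xs m))\<^sup>2 \<le> 4 * (1 / (real n + 1) + 1 / (real m + 1)) / s" for n m
  proof -
    define d where "d = (1 / (real n + 1) + 1 / (real m + 1)) / s"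
    have "d \<ge> 0" using s by (simp add: d_def)
    have parallelogram: "(norm (xs n - xs m))\<^sup>2 \<le> 4 - (norm (xs n + xs m))\<^sup>2"
    proof -
      have "(norm (xs n))\<^sup>2 \<le> 1" "(norm (xs m))\<^sup>2 \<le> 1"
        using unit by (simp_all add: power_le_one)
      then show ?thesis using norm_diff_parallelogram[of "xs n" "xs m"] by linarith
    qed
    have "2 * s - s * d < Re (f (xs n + xs m))"
      using near[of n] near[of m] s by (simp add: add d_def)
    also have "\<dots> \<le> s * norm (xs n + xs m)" by (rule bound)
    finally have "s * (2 - d) < s * norm (xs n + xs m)" by (simp add: algebra_simps)
    then have sum_large: "2 - d < norm (xs n + xs m)" using s by simp
    show ?thesis
    proof (cases "d \<le> 2")
      case True
      then have "(2 - d)\<^sup>2 \<le> (norm (xs n + xs m))\<^sup>2"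
        using sum_large by (intro power_mono) auto
      then have "(norm (xs n - xs m))\<^sup>2 \<le> 4 - (2 - d)\<^sup>2" using parallelogram by linarith
      also have "\<dots> \<le> 4 * d" using \<open>d \<ge> 0\<close> by (simp add: power2_eq_square algebra_simps)
      finally show ?thesis by (simp add: d_def)
    next
      case False
      have "(norm (xs n - xs m))\<^sup>2 \<le> 4"
        using parallelogram zero_le_power2[of "norm (xs n + xs m)"] by linarith
      also have "\<dots> \<le> 4 * d" using False by simp
      finally show ?thesis by (simp add: d_def)
    qed
  qed
  show "Cauchy xs"
  proof (rule metric_CauchyI)
    fix e :: real assume e: "e > 0"
    obtain N :: nat where N: "8 / (s * e\<^sup>2) < real N + 1"
      using reals_Archimedean2 by (metis add.commute less_add_one order_less_trans)
    have "dist (xs m) (xs n) < e" if "m \<ge> N" "n \<ge> N" for m n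
    proof -
      have "1 / (real m + 1) \<le> 1 / (real N + 1)" "1 / (real n + 1) \<le> 1 / (real N + 1)"
        using that by (simp_all add: frac_le)
      then have "4 * (1 / (real m + 1) + 1 / (real n + 1)) \<le> 8 / (real N + 1)" by simp
      then have "4 * (1 / (real m + 1) + 1 / (real n + 1)) / s \<le> 8 / (real N + 1) / s"
        using s by (rule divide_right_mono[OF _ less_imp_le])
      also have "\<dots> < e\<^sup>2"
      proof -
        have "8 < (real N + 1) * (s * e\<^sup>2)"
          using N s e by (simp add: divide_less_eq mult.commute)
        then have "8 < ((real N + 1) * s) * e\<^sup>2" by (simp add: algebra_simps)
        moreover have "(real N + 1) * s > 0" using s by simp
        ultimately show ?thesis by (simp add: pos_divide_less_eq mult.commute)
      qed
      finally have "(norm (xs m - xs n))\<^sup>2 < e\<^sup>2" using key[of m n] by linarith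
      then show ?thesis using e by (simp add: dist_norm power_less_imp_less_base)
    qed
    then show "\<exists>M. \<forall>m\<ge>M. \<forall>n\<ge>M. dist (xs m) (xs n) < e" by blast
  qed
qed

lemma Re_bound_near_maximizers:
  fixes f :: "'a::complex_hilbert \<Rightarrow> complex"
  assumes sc: "\<And>c x. f (scaleC c x) = c * f x"
    and bd: "\<And>x. cmod (f x) \<le> K * norm x" and x0: "f x0 \<noteq> 0"
  obtains s xs where "s > 0" "\<And>z. Re (f z) \<le> s * norm z"
    "\<And>n. norm (xs n) \<le> 1" "\<And>n. s - 1 / (real n + 1) < Re (f (xs n))"
proof -
  define S where "S = {Re (f x) | x. norm x \<le> 1}"
  have "S \<noteq> {}" unfolding S_def by (auto intro: exI[of _ 0])
  have "bdd_above S"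
  proof -
    have "Re (f x) \<le> \<bar>K\<bar>" if "norm x \<le> 1" for x
    proof -
      have "Re (f x) \<le> K * norm x" using complex_Re_le_cmod bd order_trans by blast
      also have "\<dots> \<le> \<bar>K\<bar> * norm x" by (simp add: mult_right_mono)
      also have "\<dots> \<le> \<bar>K\<bar>" using that by (simp add: mult_left_le)
      finally show ?thesis .
    qed
    then show ?thesis unfolding S_def bdd_above_def by blast
  qed
  define s where "s = Sup S"
  have bound: "Re (f z) \<le> s * norm z" for z
  proof (cases "z = 0")
    case True then show ?thesis using sc[of 0 0] by simp
  next
    case False
    define z' where "z' = scaleC (complex_of_real (1 / norm z)) z"
    have "norm z' = 1" using False by (simp add: z'_def norm_scaleC norm_divide)
    then have "Re (f z') \<in> S" unfolding S_def by auto
    then have "Re (f z') \<le> s" unfolding s_def using \<open>bdd_above S\<close> by (rule cSup_upper)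
    moreover have "Re (f z') = Re (f z) / norm z" by (simp add: z'_def sc)
    ultimately show ?thesis using False by (simp add: divide_le_eq mult.commute)
  qed
  have "s > 0"
  proof -
    define z where "z = scaleC (cnj (f x0)) x0"
    have "Re (f z) = (cmod (f x0))\<^sup>2" by (simp add: z_def sc cnj_mult_self)
    then have "0 < Re (f z)" using x0 by simp
    then have "0 < s * norm z" using bound[of z] by linarith
    then show ?thesis by (simp add: zero_less_mult_iff)
  qed
  have "\<exists>x. norm x \<le> 1 \<and> s - 1 / (real n + 1) < Re (f x)" for n
  proof -
    have "s - 1 / (real n + 1) < s" by simp
    then obtain y where "y \<in> S" "s - 1 / (real n + 1) < y"
      unfolding s_def using less_cSupE[OF _ \<open>S \<noteq> {}\<close>] by blast
    then show ?thesis unfolding S_def by auto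
  qed
  then obtain xs where "\<And>n. norm (xs n) \<le> 1" "\<And>n. s - 1 / (real n + 1) < Re (f (xs n))"
    by metis
  with \<open>s > 0\<close> bound that show thesis by blast
qed

lemma Re_maximal_imp_real:
  fixes f :: "'a::complex_hilbert \<Rightarrow> complex"
  assumes sc: "\<And>c x. f (scaleC c x) = c * f x"
    and bound: "\<And>z. Re (f z) \<le> s * norm z" and s: "s > 0"
    and u: "norm u = 1" and Re_u: "Re (f u) = s"
  shows "f u = complex_of_real s"
proof -
  have "(cmod (f u))\<^sup>2 = Re (f (scaleC (cnj (f u)) u))" by (simp add: sc cnj_mult_self)
  also have "\<dots> \<le> s * cmod (f u)" using bound[of "scaleC (cnj (f u)) u"] by (simp add: norm_scaleC u)
  finally have "cmod (f u) \<le> s"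
    using s by (cases "cmod (f u) = 0") (simp_all add: power2_eq_square mult_le_cancel_right)
  moreover have "s \<le> cmod (f u)" using Re_u complex_Re_le_cmod by metis
  ultimately have "cmod (f u) = Re (f u)" using Re_u by simp
  then have "Im (f u) = 0" using cmod_power2[of "f u"] by simp
  then show ?thesis using Re_u by (simp add: complex_eq_iff)
qed

lemma riesz_norming_vector:
  fixes f :: "'a::complex_hilbert \<Rightarrow> complex"
  assumes add: "\<And>x y. f (x + y) = f x + f y" and sc: "\<And>c x. f (scaleC c x) = c * f x"
    and bd: "\<And>x. cmod (f x) \<le> K * norm x" and x0: "f x0 \<noteq> 0"
  obtains u s where "norm u = 1" "s > 0" "f u = complex_of_real s" "\<And>z. Re (f z) \<le> s * norm z"
proof -
  obtain s xs where s: "s > 0" and bound: "\<And>z. Re (f z) \<le> s * norm z"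
    and unit: "\<And>n. norm (xs n) \<le> 1" and near: "\<And>n. s - 1 / (real n + 1) < Re (f (xs n))"
    using Re_bound_near_maximizers[OF sc bd x0] by blast
  have "Cauchy xs" by (rule near_maximizers_Cauchy[OF add bound s unit near])
  then obtain u where lim: "xs \<longlonglongrightarrow> u" using Cauchy_convergent_iff convergent_def by blast
  have "bounded_linear f"
    by (rule bounded_linear_intro[where K=K])
       (simp_all add: add scaleR_eq_scaleC sc scaleR_conv_of_real bd mult.commute)
  then have lim_f: "(\<lambda>n. Re (f (xs n))) \<longlonglongrightarrow> Re (f u)"
    using lim by (intro tendsto_Re isCont_tendsto_compose[where g=f] linear_continuous_at)
  have lim_s: "(\<lambda>n. s - 1 / (real n + 1)) \<longlonglongrightarrow> s - 0"
    using LIMSEQ_inverse_real_of_nat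
    by (intro tendsto_diff tendsto_const) (simp add: inverse_eq_divide add.commute)
  have "s - 0 \<le> Re (f u)"
    by (rule LIMSEQ_le[OF lim_s lim_f]) (use near in \<open>auto intro: less_imp_le\<close>)
  moreover have u_le: "norm u \<le> 1"
    using tendsto_norm[OF lim] by (rule LIMSEQ_le_const2) (use unit in auto)
  moreover have "s * norm u \<le> s" using u_le s by (simp add: mult_left_le)
  ultimately have Re_u: "Re (f u) = s" using bound[of u] by linarith
  then have "norm u = 1" using bound[of u] s u_le by (simp add: mult_le_cancel_left1)
  with Re_u show thesis using that s bound Re_maximal_imp_real[OF sc bound s] by blast
qed

lemma riesz_kernel_orthogonal:
  fixes f :: "'a::complex_hilbert \<Rightarrow> complex"
  assumes add: "\<And>x y. f (x + y) = f x + f y" and sc: "\<And>c x. f (scaleC c x) = c * f x"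
    and u: "norm u = 1" and s: "s > 0" and fu: "f u = complex_of_real s"
    and bound: "\<And>z. Re (f z) \<le> s * norm z" and kernel: "f k = 0"
  shows "cinner u k = 0"
proof -
  define c where "c = cinner u k"
  define e where "e = 1 / ((norm k)\<^sup>2 + 1)"
  have "(norm k)\<^sup>2 + 1 > 0" by (simp add: add_nonneg_pos)
  then have "e > 0" "e * (norm k)\<^sup>2 < 1" by (simp_all add: e_def field_simps)
  define t where "t = - complex_of_real e * cnj c"
  define z where "z = u + scaleC t k"
  text \<open>\<open>z\<close> lies on the affine hyperplane \<open>f = s\<close>, so it cannot be shorter than \<open>u\<close>.\<close>
  have "Re (f z) = s" by (simp add: z_def add sc kernel fu)
  then have "1 \<le> norm z" using bound[of z] s by (simp add: mult_le_cancel_left1)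
  then have "1 \<le> Re (cinner z z)" by (simp add: Re_cinner_self one_le_power)
  also have "cinner z z = cinner u u + t * c + cnj (t * c) + cnj t * t * cinner k k"
    by (simp add: z_def c_def cinner_add_left cinner_add_right cinner_scaleC_left
        cinner_scaleC_right algebra_simps cinner_commute[of k u])
  also have "Re \<dots> = 1 - 2 * e * (cmod c)\<^sup>2 + e\<^sup>2 * (cmod c)\<^sup>2 * (norm k)\<^sup>2"
  proof -
    have "t * c = - complex_of_real (e * (cmod c)\<^sup>2)"
      by (simp add: t_def cnj_mult_self mult.assoc)
    moreover have "cnj t * t = complex_of_real (e\<^sup>2 * (cmod c)\<^sup>2)"
      by (simp add: t_def cnj_mult_self power2_eq_square algebra_simps)
    ultimately show ?thesis by (simp add: cinner_self u)
  qed
  finally have "2 * e * (cmod c)\<^sup>2 \<le> e * (cmod c)\<^sup>2 * (e * (norm k)\<^sup>2)"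
    by (simp add: power2_eq_square algebra_simps)
  moreover have "e * (cmod c)\<^sup>2 * (e * (norm k)\<^sup>2) \<le> e * (cmod c)\<^sup>2"
    using \<open>e * (norm k)\<^sup>2 < 1\<close> \<open>e > 0\<close> by (intro mult_left_le) auto
  ultimately have "e * (cmod c)\<^sup>2 \<le> 0" by linarith
  then show ?thesis using \<open>e > 0\<close> by (simp add: c_def mult_le_0_iff)
qed

lemma riesz_representation:
  fixes f :: "'a::complex_hilbert \<Rightarrow> complex"
  assumes add: "\<And>x y. f (x + y) = f x + f y" and sc: "\<And>c x. f (scaleC c x) = c * f x"
    and bd: "\<And>x. cmod (f x) \<le> K * norm x"
  shows "\<exists>w. \<forall>x. f x = cinner w x"
proof (cases "\<forall>x. f x = 0")
  case True then show ?thesis by (intro exI[of _ 0]) simp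
next
  case False
  then obtain u s where u: "norm u = 1" "s > 0" "f u = complex_of_real s"
    "\<And>z. Re (f z) \<le> s * norm z"
    using riesz_norming_vector[OF add sc bd] by blast
  show ?thesis
  proof (intro exI allI)
    fix v
    have "f (scaleC (f u) v - scaleC (f v) u) = 0"
      by (simp add: diff_conv_add_uminus add scaleC_minus1[symmetric] sc scaleC_scaleC mult.commute)
    then have "cinner u (scaleC (f u) v - scaleC (f v) u) = 0"
      by (rule riesz_kernel_orthogonal[OF add sc u])
    then have "f u * cinner u v - f v * cinner u u = 0"
      by (simp add: cinner_diff_right cinner_scaleC_right)
    then show "f v = cinner (scaleC (complex_of_real s) u) v"
      by (simp add: cinner_scaleC_left u cinner_self)
  qed
qed

lemma bounded_op_add: "bounded_op A \<Longrightarrow> A (x + y) = A x + A y"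
  by (simp add: bounded_op_def)

lemma bounded_op_scaleC: "bounded_op A \<Longrightarrow> A (scaleC c x) = scaleC c (A x)"
  by (simp add: bounded_op_def)

lemma bounded_op_minus: "bounded_op A \<Longrightarrow> A (- x) = - A x"
  using bounded_op_scaleC[of A "-1" x] by (simp add: scaleC_minus1)

lemma bounded_op_diff: "bounded_op A \<Longrightarrow> A (x - y) = A x - A y"
  using bounded_op_add[of A x "-y"] bounded_op_minus[of A y] by simp

lemma bounded_op_bound:
  assumes "bounded_op A"
  obtains K where "K > 0" "\<And>x. norm (A x) \<le> K * norm x"
proof -
  obtain K where K: "\<And>x. norm (A x) \<le> K * norm x" using assms by (auto simp: bounded_op_def)
  have "norm (A x) \<le> max K 1 * norm x" for x
    using K[of x] by (metis max.cobounded1 mult_right_mono norm_ge_zero order_trans)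
  then show ?thesis using that[of "max K 1"] by simp
qed

lemma bounded_op_bounded_linear: assumes "bounded_op A" shows "bounded_linear A"
proof -
  obtain K where "K > 0" "\<And>x. norm (A x) \<le> K * norm x" using bounded_op_bound assms by blast
  then show ?thesis
    by (intro bounded_linear_intro[where K=K])
      (auto simp: bounded_op_add[OF assms] scaleR_eq_scaleC bounded_op_scaleC[OF assms]
          mult.commute)
qed

lemma bounded_op_continuous_on: "bounded_op A \<Longrightarrow> continuous_on UNIV A"
  by (intro linear_continuous_on bounded_op_bounded_linear)

lemma bounded_op_ident: "bounded_op (\<lambda>v. v)"
  unfolding bounded_op_def by (auto intro: exI[of _ 1])

lemma bounded_op_add_op: assumes "bounded_op A" "bounded_op B" shows "bounded_op (\<lambda>v. A v + B v)"
proof -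
  obtain K where K: "\<And>x. norm (A x) \<le> K * norm x" using bounded_op_bound assms(1) by blast
  obtain L where L: "\<And>x. norm (B x) \<le> L * norm x" using bounded_op_bound assms(2) by blast
  have "norm (A x + B x) \<le> (K + L) * norm x" for x
    using norm_triangle_ineq[of "A x" "B x"] K[of x] L[of x] by (simp add: algebra_simps)
  then show ?thesis unfolding bounded_op_def
    by (auto simp: scaleC_add_right algebra_simps bounded_op_add[OF assms(1)]
        bounded_op_add[OF assms(2)] bounded_op_scaleC[OF assms(1)] bounded_op_scaleC[OF assms(2)]
        intro!: exI[of _ "K + L"])
qed

lemma bounded_op_scale_op: assumes "bounded_op A" shows "bounded_op (\<lambda>v. scaleC c (A v))"
proof -
  obtain K where K: "\<And>x. norm (A x) \<le> K * norm x" using bounded_op_bound assms(1) by blast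
  have "norm (scaleC c (A x)) \<le> (cmod c * K) * norm x" for x
    using K[of x] by (simp add: norm_scaleC mult.assoc mult_left_mono)
  then show ?thesis unfolding bounded_op_def
    by (auto simp: scaleC_add_right scaleC_scaleC mult.commute bounded_op_add[OF assms(1)]
        bounded_op_scaleC[OF assms(1)] intro!: exI[of _ "cmod c * K"])
qed

lemma bounded_op_comp: assumes "bounded_op A" "bounded_op B" shows "bounded_op (A \<circ> B)"
proof -
  obtain K where K: "K > 0" "\<And>x. norm (A x) \<le> K * norm x" using bounded_op_bound assms(1) by blast
  obtain L where L: "\<And>x. norm (B x) \<le> L * norm x" using bounded_op_bound assms(2) by blast
  have "norm (A (B x)) \<le> (K * L) * norm x" for x
    using K(2)[of "B x"] L[of x] less_imp_le[OF K(1)]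
    by (metis mult.assoc mult_left_mono order_trans)
  then show ?thesis using assms unfolding bounded_op_def by auto
qed

lemma bounded_op_diff_op: assumes "bounded_op A" "bounded_op B" shows "bounded_op (\<lambda>v. A v - B v)"
proof -
  have "bounded_op (\<lambda>v. A v + scaleC (-1) (B v))"
    by (intro bounded_op_add_op bounded_op_scale_op assms)
  then show ?thesis by (simp add: scaleC_minus1)
qed

lemma adjoint_exists: assumes "bounded_op A" shows "\<exists>B. \<forall>x y. cinner (A x) y = cinner x (B y)"
proof -
  obtain K where K: "\<And>x. norm (A x) \<le> K * norm x" using bounded_op_bound assms by blast
  have "\<exists>w. \<forall>x. cinner y (A x) = cinner w x" for y
  proof (rule riesz_representation[where K="norm y * K"])
    show "cinner y (A (x + x')) = cinner y (A x) + cinner y (A x')" for x x'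
      by (simp add: bounded_op_add[OF assms] cinner_add_right)
    show "cinner y (A (scaleC c x)) = c * cinner y (A x)" for c x
      by (simp add: bounded_op_scaleC[OF assms] cinner_scaleC_right)
    show "cmod (cinner y (A x)) \<le> norm y * K * norm x" for x
      using cmod_cinner_le[of y "A x"] K[of x]
      by (metis mult.assoc mult_left_mono norm_ge_zero order_trans)
  qed
  then obtain B where "\<And>y x. cinner y (A x) = cinner (B y) x" by metis
  then have "cinner (A x) y = cinner x (B y)" for x y by (metis cinner_commute)
  then show ?thesis by blast
qed

lemma cinner_apply_adj: "bounded_op A \<Longrightarrow> cinner (A x) y = cinner x (adj A y)"
  unfolding adj_def using someI_ex[OF adjoint_exists] by blast

lemma cinner_adj_apply: "bounded_op A \<Longrightarrow> cinner x (A y) = cinner (adj A x) y"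
  by (metis cinner_apply_adj cinner_commute)

lemma adj_unique: assumes "\<And>x y. cinner (A x) y = cinner x (B y)" shows "adj A = B"
proof -
  have "\<forall>x y. cinner (A x) y = cinner x (adj A y)"
    unfolding adj_def using someI[of "\<lambda>B. \<forall>x y. cinner (A x) y = cinner x (B y)" B] assms by blast
  then show ?thesis using assms by (intro ext cinner_ext) metis
qed

lemma bounded_op_adj: assumes A: "bounded_op A" shows "bounded_op (adj A)"
proof -
  obtain K where K: "K > 0" "\<And>x. norm (A x) \<le> K * norm x" using bounded_op_bound A by blast
  have add: "adj A (x + y) = adj A x + adj A y" for x y
    by (rule cinner_ext) (simp add: cinner_apply_adj[OF A, symmetric] cinner_add_right)
  have sc: "adj A (scaleC c x) = scaleC c (adj A x)" for c x
    by (rule cinner_ext) (simp add: cinner_apply_adj[OF A, symmetric] cinner_scaleC_right)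
  have "norm (adj A y) \<le> K * norm y" for y
  proof -
    have "(norm (adj A y))\<^sup>2 = Re (cinner (A (adj A y)) y)"
      by (simp add: cinner_apply_adj[OF A] Re_cinner_self)
    also have "\<dots> \<le> cmod (cinner (A (adj A y)) y)" by (rule complex_Re_le_cmod)
    also have "\<dots> \<le> norm (A (adj A y)) * norm y" by (rule cmod_cinner_le)
    also have "\<dots> \<le> K * norm (adj A y) * norm y" by (simp add: K(2) mult_right_mono)
    finally have "norm (adj A y) * norm (adj A y) \<le> norm (adj A y) * (K * norm y)"
      by (simp add: power2_eq_square algebra_simps)
    then show ?thesis
      by (cases "norm (adj A y) = 0") (use K(1) in \<open>auto simp: mult_le_cancel_left\<close>)
  qed
  then show ?thesis unfolding bounded_op_def using add sc by blast
qed

lemma adj_adj: "bounded_op A \<Longrightarrow> adj (adj A) = A"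
  by (rule adj_unique) (metis cinner_apply_adj cinner_commute)

lemma adj_comp: assumes "bounded_op A" "bounded_op B" shows "adj (A \<circ> B) = adj B \<circ> adj A"
  by (rule adj_unique) (simp add: cinner_apply_adj assms)

lemma adj_comp_lambda:
  assumes "bounded_op A" "bounded_op B"
  shows "adj (\<lambda>v. A (B v)) = (\<lambda>v. adj B (adj A v))"
  using adj_comp[OF assms] by (simp add: comp_def)

lemma adj_add_op:
  assumes "bounded_op A" "bounded_op B"
  shows "adj (\<lambda>v. A v + B v) = (\<lambda>v. adj A v + adj B v)"
  by (rule adj_unique) (simp add: cinner_apply_adj assms cinner_add_left cinner_add_right)

lemma adj_scale_op:
  assumes "bounded_op A"
  shows "adj (\<lambda>v. scaleC c (A v)) = (\<lambda>v. scaleC (cnj c) (adj A v))"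
  by (rule adj_unique) (simp add: cinner_apply_adj assms cinner_scaleC_left cinner_scaleC_right)

lemma adj_ident: "adj (\<lambda>v. v) = (\<lambda>v. v)"
  by (rule adj_unique) simp

lemma commutant_bounded_op: "B \<in> commutant S \<Longrightarrow> bounded_op B"
  by (simp add: commutant_def)

lemma commutant_commute: "B \<in> commutant S \<Longrightarrow> A \<in> S \<Longrightarrow> A (B v) = B (A v)"
  unfolding commutant_def by (metis (mono_tags, lifting) comp_apply mem_Collect_eq)

lemma commutantI: "bounded_op B \<Longrightarrow> (\<And>A v. A \<in> S \<Longrightarrow> A (B v) = B (A v)) \<Longrightarrow> B \<in> commutant S"
  unfolding commutant_def by (auto simp: fun_eq_iff)

lemma ident_in_commutant: "(\<lambda>v. v) \<in> commutant S"
  by (rule commutantI[OF bounded_op_ident]) simp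

lemma commutant_add_op:
  "\<forall>A\<in>S. bounded_op A \<Longrightarrow> B \<in> commutant S \<Longrightarrow> C \<in> commutant S \<Longrightarrow>
    (\<lambda>v. B v + C v) \<in> commutant S"
  by (rule commutantI)
    (auto intro: bounded_op_add_op commutant_bounded_op simp: bounded_op_add,
      metis commutant_commute)

lemma commutant_scale_op:
  "\<forall>A\<in>S. bounded_op A \<Longrightarrow> B \<in> commutant S \<Longrightarrow> (\<lambda>v. scaleC c (B v)) \<in> commutant S"
  by (rule commutantI)
    (auto intro: bounded_op_scale_op commutant_bounded_op simp: bounded_op_scaleC,
      metis commutant_commute)

lemma commutant_comp: "B \<in> commutant S \<Longrightarrow> C \<in> commutant S \<Longrightarrow> (B \<circ> C) \<in> commutant S"
  by (rule commutantI)
    (auto intro: bounded_op_comp commutant_bounded_op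
      simp: commutant_commute[of B S] commutant_commute[of C S])

lemma commutant_comp_lambda: "B \<in> commutant S \<Longrightarrow> C \<in> commutant S \<Longrightarrow> (\<lambda>v. B (C v)) \<in> commutant S"
  using commutant_comp[of B S C] by (simp add: comp_def)

lemma commutant_diff_op:
  "\<forall>A\<in>S. bounded_op A \<Longrightarrow> B \<in> commutant S \<Longrightarrow> C \<in> commutant S \<Longrightarrow>
    (\<lambda>v. B v - C v) \<in> commutant S"
  using commutant_add_op[of S B "\<lambda>v. scaleC (-1) (C v)"] commutant_scale_op[of S C "-1"]
  by (simp add: scaleC_minus1)

lemma adj_in_commutant:
  assumes "\<forall>A\<in>S. bounded_op A \<and> adj A \<in> S" "B \<in> commutant S"
  shows "adj B \<in> commutant S"
proof (rule commutantI)
  have B: "bounded_op B" using assms(2) commutant_bounded_op by blast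
  show "bounded_op (adj B)" using bounded_op_adj[OF B] .
  fix A v assume A: "A \<in> S"
  have bA: "bounded_op A" "adj A \<in> S" using assms(1) A by auto
  have "B \<circ> adj A = adj A \<circ> B" using commutant_commute[OF assms(2) bA(2)] by (auto simp: fun_eq_iff)
  then have "adj (B \<circ> adj A) = adj (adj A \<circ> B)" by simp
  then have "A \<circ> adj B = adj B \<circ> A"
    by (simp add: adj_comp bA B bounded_op_adj adj_adj)
  then show "A (adj B v) = adj B (A v)" by (metis comp_apply)
qed

lemma quadratic_nonneg_imp_cauchy_schwarz:
  fixes A B :: real and C :: complex
  assumes h: "\<And>t. 0 \<le> A + 2 * Re (t * C) + (cmod t)\<^sup>2 * B" and B: "B \<ge> 0"
  shows "(cmod C)\<^sup>2 \<le> A * B"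
proof (cases "B > 0")
  case True
  define t where "t = - cnj C / complex_of_real B"
  have "t * C = - (cnj C * C) / complex_of_real B" by (simp add: t_def)
  also have "\<dots> = - complex_of_real ((cmod C)\<^sup>2 / B)" by (simp only: cnj_mult_self) simp
  finally have "Re (t * C) = - (cmod C)\<^sup>2 / B" by simp
  moreover have "(cmod t)\<^sup>2 = (cmod C)\<^sup>2 / B\<^sup>2"
    using True by (simp add: t_def norm_divide power_divide)
  ultimately have "0 \<le> A - 2 * (cmod C)\<^sup>2 / B + (cmod C)\<^sup>2 / B\<^sup>2 * B" using h[of t] by simp
  also have "(cmod C)\<^sup>2 / B\<^sup>2 * B = (cmod C)\<^sup>2 / B" using True by (simp add: power2_eq_square)
  finally have "(cmod C)\<^sup>2 / B \<le> A" by simp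
  then show ?thesis using True by (simp add: divide_le_eq mult.commute)
next
  case False
  then have B0: "B = 0" using B by simp
  show ?thesis
  proof (rule ccontr)
    assume "\<not> ?thesis"
    then have Cp: "(cmod C)\<^sup>2 > 0" using B0 by simp
    define r where "r = (\<bar>A\<bar> + 1) / (2 * (cmod C)\<^sup>2)"
    define t where "t = - complex_of_real r * cnj C"
    have "t * C = - complex_of_real r * (cnj C * C)" by (simp add: t_def)
    also have "\<dots> = - complex_of_real (r * (cmod C)\<^sup>2)" by (simp only: cnj_mult_self) simp
    finally have "Re (t * C) = - r * (cmod C)\<^sup>2" by simp
    then have "0 \<le> A - 2 * r * (cmod C)\<^sup>2" using h[of t] B0 by simp
    also have "2 * r * (cmod C)\<^sup>2 = \<bar>A\<bar> + 1" using Cp by (simp add: r_def)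
    finally show False by simp
  qed
qed

lemma hermitian_form_cauchy_schwarz:
  fixes A B C D :: complex
  assumes h: "\<And>t. Im (A + t * C + cnj t * D + cnj t * t * B) = 0 \<and>
      0 \<le> Re (A + t * C + cnj t * D + cnj t * t * B)"
    and B: "Im B = 0" "0 \<le> Re B"
  shows "(cmod C)\<^sup>2 \<le> Re A * Re B"
proof -
  have A: "Im A = 0" using h[of 0] by simp
  have "Im (C + D) = 0" using h[of 1] A B by simp
  moreover have "Re (C - D) = 0" using h[of \<i>] A B by simp
  ultimately have DC: "D = cnj C" by (simp add: complex_eq_iff)
  show ?thesis
  proof (rule quadratic_nonneg_imp_cauchy_schwarz[OF _ B(2)])
    fix t
    have "A + t * C + cnj t * D + cnj t * t * B =
        A + (t * C + cnj (t * C)) + complex_of_real ((cmod t)\<^sup>2) * B"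
      by (simp only: DC cnj_mult_self complex_cnj_mult) (simp add: algebra_simps)
    moreover have "Re (t * C + cnj (t * C)) = 2 * Re (t * C)" by simp
    moreover have "Re (complex_of_real ((cmod t)\<^sup>2) * B) = (cmod t)\<^sup>2 * Re B" using B by simp
    ultimately have "Re (A + t * C + cnj t * D + cnj t * t * B) =
        Re A + 2 * Re (t * C) + (cmod t)\<^sup>2 * Re B"
      by (simp only: plus_complex.sel)
    then show "0 \<le> Re A + 2 * Re (t * C) + (cmod t)\<^sup>2 * Re B"
      using conjunct2[OF h[of t]] by linarith
  qed
qed

lemma pos_op_bounded: "pos_op P \<Longrightarrow> bounded_op P"
  by (simp add: pos_op_def)

lemma pos_op_Im: "pos_op P \<Longrightarrow> Im (cinner v (P v)) = 0"
  by (simp add: pos_op_def)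

lemma pos_op_Re: "pos_op P \<Longrightarrow> 0 \<le> Re (cinner v (P v))"
  by (simp add: pos_op_def)

lemma quadratic_form_zero_imp_zero:
  assumes C: "bounded_op C" and h: "\<And>w. cinner w (C w) = 0"
  shows "C v = 0"
proof -
  have "cinner u (C v) = 0" for u
  proof -
    have e1: "cinner (u + v) (C (u + v)) =
        cinner u (C u) + cinner u (C v) + cinner v (C u) + cinner v (C v)"
      by (simp add: bounded_op_add[OF C] cinner_add_left cinner_add_right)
    have e2: "cinner (u + scaleC \<i> v) (C (u + scaleC \<i> v)) =
        cinner u (C u) + \<i> * cinner u (C v) - \<i> * cinner v (C u) + cinner v (C v)"
      by (simp add: bounded_op_add[OF C] bounded_op_scaleC[OF C] cinner_add_left cinner_add_right
          cinner_scaleC_left cinner_scaleC_right algebra_simps)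
    have "cinner u (C v) + cinner v (C u) = 0" using e1 h by simp
    moreover have "cinner u (C v) - cinner v (C u) = 0"
      using e2 h by (simp add: right_diff_distrib[symmetric])
    ultimately have "(cinner u (C v) + cinner v (C u)) + (cinner u (C v) - cinner v (C u)) = 0"
      by simp
    then have "2 * cinner u (C v) = 0" by (simp add: algebra_simps)
    then show ?thesis by simp
  qed
  then show ?thesis by (intro cinner_ext) simp
qed

lemma adj_pos_op: assumes P: "pos_op P" shows "adj P = P"
proof -
  have bP: "bounded_op P" using P pos_op_bounded by blast
  have bC: "bounded_op (\<lambda>v. adj P v - P v)" by (intro bounded_op_diff_op bounded_op_adj bP)
  have "cinner w (adj P w - P w) = 0" for w
  proof -
    have "cinner w (adj P w) = cinner (P w) w" by (simp add: cinner_apply_adj[OF bP])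
    also have "\<dots> = cnj (cinner w (P w))" by (rule cinner_commute)
    also have "\<dots> = cinner w (P w)" using pos_op_Im[OF P, of w] by (simp add: complex_eq_iff)
    finally show "cinner w (adj P w - P w) = 0" by (simp add: cinner_diff_right)
  qed
  then have "adj P v - P v = 0" for v using quadratic_form_zero_imp_zero[OF bC] by simp
  then show ?thesis by auto
qed

lemma pos_op_self_adjoint: assumes "pos_op P" shows "cinner (P x) y = cinner x (P y)"
  using cinner_apply_adj[OF pos_op_bounded[OF assms]] adj_pos_op[OF assms] by simp

lemma pos_op_cauchy_schwarz: assumes P: "pos_op P"
  shows "(cmod (cinner u (P w)))\<^sup>2 \<le> Re (cinner u (P u)) * Re (cinner w (P w))"
proof -
  have bP: "bounded_op P" using P pos_op_bounded by blast
  have expand: "cinner (u + scaleC t w) (P (u + scaleC t w)) =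
      cinner u (P u) + t * cinner u (P w) + cnj t * cinner w (P u) + cnj t * t * cinner w (P w)" for t
    by (simp add: bounded_op_add[OF bP] bounded_op_scaleC[OF bP] cinner_add_left
        cinner_add_right cinner_scaleC_left cinner_scaleC_right algebra_simps)
  have "Im (cinner (u + scaleC t w) (P (u + scaleC t w))) = 0 \<and>
      0 \<le> Re (cinner (u + scaleC t w) (P (u + scaleC t w)))" for t
    using pos_op_Im[OF P] pos_op_Re[OF P] by blast
  then show ?thesis
    unfolding expand by (rule hermitian_form_cauchy_schwarz[OF _ pos_op_Im[OF P] pos_op_Re[OF P]])
qed

lemma pos_op_adj_comp:
  assumes "bounded_op a"
  shows "pos_op (\<lambda>v. adj a (a v))"
  unfolding pos_op_def
proof (intro conjI allI)
  show "bounded_op (\<lambda>v. adj a (a v))"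
    using bounded_op_comp[OF bounded_op_adj[OF assms] assms] by (simp add: comp_def)
  fix v
  have "cinner v (adj a (a v)) = complex_of_real ((norm (a v))\<^sup>2)"
    by (simp add: cinner_adj_apply[OF assms, symmetric] cinner_apply_adj[OF assms, symmetric]
        cinner_self)
  then show "Im (cinner v (adj a (a v))) = 0" "0 \<le> Re (cinner v (adj a (a v)))" by simp_all
qed

section \<open>Products of commuting positive operators\<close>

text \<open>Without a functional calculus at hand, positivity of a product of commuting positive
operators is obtained by a power trick: for a self-adjoint contraction \<open>Q\<close> commuting with \<open>P\<close>,
Cauchy-Schwarz for \<open>(u, w) \<mapsto> \<langle>u, P w\<rangle>\<close> gives \<open>a\<^sub>n\<^sup>2 \<le> \<beta> a\<^sub>n\<^sub>+\<^sub>1\<close> for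
\<open>a\<^sub>n = |\<langle>v, P Q^(2^n) v\<rangle>|\<close> and \<open>\<beta> = \<langle>v, P v\<rangle>\<close>; as the \<open>a\<^sub>n\<close> are bounded, \<open>a\<^sub>0 \<le> \<beta>\<close>.\<close>

lemma iterated_square_bound_imp_le:
  fixes a :: "nat \<Rightarrow> real"
  assumes a_nonneg: "\<And>n. a n \<ge> 0" and a_bounded: "\<And>n. a n \<le> K" and \<beta>: "\<beta> \<ge> 0"
    and square: "\<And>n. (a n)\<^sup>2 \<le> \<beta> * a (Suc n)"
  shows "a 0 \<le> \<beta>"
proof (rule ccontr)
  assume "\<not> a 0 \<le> \<beta>"
  then have gt: "a 0 > \<beta>" by simp
  have iterated: "a 0 ^ (2 ^ n) \<le> \<beta> ^ (2 ^ n - 1) * a n" for n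
  proof (induction n)
    case 0 then show ?case by simp
  next
    case (Suc n)
    have "a 0 ^ (2 ^ Suc n) = (a 0 ^ (2 ^ n))\<^sup>2" by (simp add: power_mult[symmetric] mult.commute)
    also have "\<dots> \<le> (\<beta> ^ (2 ^ n - 1) * a n)\<^sup>2"
      using Suc.IH by (intro power_mono) (simp_all add: a_nonneg)
    also have "\<dots> = \<beta> ^ ((2 ^ n - 1) * 2) * (a n)\<^sup>2" by (simp only: power_mult_distrib power_mult)
    also have "\<dots> \<le> \<beta> ^ ((2 ^ n - 1) * 2) * (\<beta> * a (Suc n))"
      using square[of n] \<beta> by (intro mult_left_mono) simp_all
    also have "\<dots> = \<beta> ^ ((2 ^ n - 1) * 2 + 1) * a (Suc n)" by (simp add: power_add mult.assoc)
    also have "(2 ^ n - 1) * 2 + 1 = (2 ^ Suc n - 1 :: nat)"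
    proof -
      have "\<forall>m::nat. m \<ge> 1 \<longrightarrow> (m - 1) * 2 + 1 = 2 * m - 1" by presburger
      then show ?thesis by simp
    qed
    finally show ?case .
  qed
  show False
  proof (cases "\<beta> = 0")
    case True
    then show False using square[of 0] gt by simp
  next
    case False
    then have "\<beta> > 0" using \<beta> by simp
    define x where "x = a 0 / \<beta>"
    have "x > 1" using gt \<open>\<beta> > 0\<close> by (simp add: x_def)
    then obtain n where n: "K / \<beta> < x ^ n" using real_arch_pow by blast
    have "x ^ n \<le> x ^ (2 ^ n)" using \<open>x > 1\<close> by (intro power_increasing) simp_all
    have "a 0 ^ (2 ^ n) = x ^ (2 ^ n) * \<beta> ^ (2 ^ n)"
      using \<open>\<beta> > 0\<close> by (simp add: x_def power_divide)
    moreover have "\<beta> ^ (2 ^ n) = \<beta> ^ (2 ^ n - 1) * \<beta>" by (simp add: power_Suc2[symmetric])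
    ultimately have "\<beta> ^ (2 ^ n - 1) * (x ^ (2 ^ n) * \<beta>) = a 0 ^ (2 ^ n)"
      by (simp add: algebra_simps)
    also have "\<dots> \<le> \<beta> ^ (2 ^ n - 1) * K"
      using iterated[of n] a_bounded[of n] \<beta> by (meson order_trans mult_left_mono zero_le_power)
    finally have "x ^ (2 ^ n) \<le> K / \<beta>"
      using \<open>\<beta> > 0\<close> by (simp add: mult_le_cancel_left pos_le_divide_eq)
    then show False using n \<open>x ^ n \<le> x ^ (2 ^ n)\<close> by linarith
  qed
qed

lemma funpow_self_adjoint_contraction:
  assumes Qsa: "\<And>x y. cinner (Q x) y = cinner x (Q y)"
    and comm: "\<And>v. P (Q v) = Q (P v)" and contr: "\<And>v. norm (Q v) \<le> norm v"
  shows "norm ((Q ^^ n) v) \<le> norm v" "cinner ((Q ^^ n) x) y = cinner x ((Q ^^ n) y)"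
    "P ((Q ^^ n) v) = (Q ^^ n) (P v)"
proof -
  show "norm ((Q ^^ n) v) \<le> norm v"
    by (induction n arbitrary: v) (auto intro: order_trans[OF contr])
  show "cinner ((Q ^^ n) x) y = cinner x ((Q ^^ n) y)"
  proof (induction n arbitrary: x y)
    case (Suc n)
    have "cinner ((Q ^^ Suc n) x) y = cinner ((Q ^^ n) x) (Q y)" by (simp add: Qsa)
    also have "\<dots> = cinner x ((Q ^^ n) (Q y))" by (rule Suc.IH)
    also have "(Q ^^ n) (Q y) = (Q ^^ Suc n) y" by (simp add: funpow_swap1)
    finally show ?case .
  qed simp
  show "P ((Q ^^ n) v) = (Q ^^ n) (P v)"
    by (induction n arbitrary: v) (auto simp: comm)
qed

lemma pos_op_commuting_contraction:
  assumes P: "pos_op P" and Qsa: "\<And>x y. cinner (Q x) y = cinner x (Q y)"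
    and comm: "\<And>v. P (Q v) = Q (P v)" and contr: "\<And>v. norm (Q v) \<le> norm v"
  shows "cmod (cinner v (P (Q v))) \<le> Re (cinner v (P v))"
proof -
  note powers = funpow_self_adjoint_contraction[of Q P, OF Qsa comm contr]
  obtain K where K: "K > 0" "\<And>x. norm (P x) \<le> K * norm x"
    using bounded_op_bound pos_op_bounded[OF P] by blast
  define a where "a n = cmod (cinner v (P ((Q ^^ (2 ^ n)) v)))" for n
  have a_bounded: "a n \<le> K * (norm v)\<^sup>2" for n
  proof -
    have "norm (P ((Q ^^ (2 ^ n)) v)) \<le> K * norm v"
      using K(2)[of "(Q ^^ (2 ^ n)) v"] powers(1)[of "2^n" v] K(1)
      by (meson order_trans mult_left_mono less_imp_le)
    then have "a n \<le> norm v * (K * norm v)"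
      unfolding a_def using cmod_cinner_le order_trans mult_left_mono norm_ge_zero by metis
    then show ?thesis by (simp add: power2_eq_square algebra_simps)
  qed
  have a_square: "(a n)\<^sup>2 \<le> Re (cinner v (P v)) * a (Suc n)" for n
  proof -
    define w where "w = (Q ^^ (2 ^ n)) v"
    have "(a n)\<^sup>2 \<le> Re (cinner v (P v)) * Re (cinner w (P w))"
      unfolding a_def w_def by (rule pos_op_cauchy_schwarz[OF P])
    also have "cinner w (P w) = cinner v (P ((Q ^^ (2 ^ Suc n)) v))"
    proof -
      have "cinner w (P w) = cinner w ((Q ^^ (2 ^ n)) (P v))" by (simp add: w_def powers(3))
      also have "\<dots> = cinner ((Q ^^ (2 ^ n)) w) (P v)" by (simp only: powers(2))
      also have "(Q ^^ (2 ^ n)) w = (Q ^^ (2 ^ Suc n)) v"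
        by (simp add: w_def funpow_add[symmetric, THEN fun_cong, simplified comp_def] mult_2)
      also have "cinner ((Q ^^ (2 ^ Suc n)) v) (P v) = cinner v ((Q ^^ (2 ^ Suc n)) (P v))"
        by (simp only: powers(2))
      also have "\<dots> = cinner v (P ((Q ^^ (2 ^ Suc n)) v))" by (simp add: powers(3))
      finally show ?thesis .
    qed
    also have "Re (cinner v (P v)) * Re (cinner v (P ((Q ^^ (2 ^ Suc n)) v)))
        \<le> Re (cinner v (P v)) * a (Suc n)"
      unfolding a_def by (intro mult_left_mono complex_Re_le_cmod pos_op_Re[OF P])
    finally show ?thesis .
  qed
  have "a 0 \<le> Re (cinner v (P v))"
    by (rule iterated_square_bound_imp_le[of a, OF _ a_bounded pos_op_Re[OF P, of v] a_square])
      (simp add: a_def)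
  then show ?thesis by (simp add: a_def)
qed

lemma pos_op_contraction_complement:
  assumes S: "pos_op S" and contr: "\<And>v. norm (S v) \<le> norm v"
  shows "norm (x - S x) \<le> norm x"
proof -
  have S_sa: "cinner (S x) y = cinner x (S y)" for x y by (rule pos_op_self_adjoint[OF S])
  have "cmod (cinner x (S (S x))) \<le> Re (cinner x (S x))"
    by (rule pos_op_commuting_contraction[OF S S_sa _ contr]) simp
  moreover have "cinner x (S (S x)) = complex_of_real ((norm (S x))\<^sup>2)"
    by (simp add: S_sa[symmetric] cinner_self)
  ultimately have S_square: "(norm (S x))\<^sup>2 \<le> Re (cinner x (S x))" by (simp add: norm_power)
  have "(norm (x - S x))\<^sup>2 = Re (cinner (x - S x) (x - S x))" by (simp add: Re_cinner_self)
  also have "\<dots> = (norm x)\<^sup>2 - 2 * Re (cinner x (S x)) + (norm (S x))\<^sup>2"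
  proof -
    have "Re (cinner (S x) x) = Re (cinner x (S x))" by (simp add: S_sa)
    then show ?thesis by (simp add: cinner_diff_left cinner_diff_right Re_cinner_self)
  qed
  also have "\<dots> \<le> (norm x)\<^sup>2" using S_square pos_op_Re[OF S, of x] by simp
  finally show ?thesis by (simp add: power_mono_iff)
qed

lemma pos_op_commuting_contraction_nonneg:
  assumes P: "pos_op P" and S: "pos_op S" and comm: "\<And>v. P (S v) = S (P v)"
    and contr: "\<And>v. norm (S v) \<le> norm v"
  shows "0 \<le> Re (cinner v (P (S v)))"
proof -
  have bP: "bounded_op P" by (rule pos_op_bounded[OF P])
  define R where "R = (\<lambda>v. v - S v)"
  have "cmod (cinner v (P (R v))) \<le> Re (cinner v (P v))"
  proof (rule pos_op_commuting_contraction[OF P])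
    show "cinner (R x) y = cinner x (R y)" for x y
      by (simp add: R_def cinner_diff_left cinner_diff_right pos_op_self_adjoint[OF S])
    show "P (R x) = R (P x)" for x by (simp add: R_def bounded_op_diff[OF bP] comm)
    show "norm (R x) \<le> norm x" for x
      unfolding R_def by (rule pos_op_contraction_complement[OF S contr])
  qed
  moreover have "cinner v (P (R v)) = cinner v (P v) - cinner v (P (S v))"
    by (simp add: R_def bounded_op_diff[OF bP] cinner_diff_right)
  ultimately show ?thesis
    using complex_Re_le_cmod[of "cinner v (P v) - cinner v (P (S v))"] by simp
qed

lemma pos_op_commuting_product:
  assumes P: "pos_op P" and Q: "pos_op Q" and comm: "\<And>v. P (Q v) = Q (P v)" and c: "c > 0"
    and bd: "\<And>v. norm (Q v) \<le> c * norm v"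
  shows "Im (cinner v (P (Q v))) = 0" "0 \<le> Re (cinner v (P (Q v)))"
    "Re (cinner v (P (Q v))) \<le> c * Re (cinner v (P v))"
proof -
  have bP: "bounded_op P" and bQ: "bounded_op Q" using P Q pos_op_bounded by auto
  define S where "S = (\<lambda>v. scaleC (complex_of_real (1 / c)) (Q v))"
  have S: "pos_op S"
    unfolding pos_op_def S_def using bounded_op_scale_op[OF bQ] pos_op_Im[OF Q] pos_op_Re[OF Q] c
    by (simp add: cinner_scaleC_right)
  have S_contr: "norm (S x) \<le> norm x" for x
    unfolding S_def norm_scaleC norm_of_real
      using bd[of x] c by (simp add: divide_le_eq mult.commute)
  have PS: "P (S x) = S (P x)" for x by (simp add: S_def bounded_op_scaleC[OF bP] comm)
  have PSv: "cinner v (P (Q v)) = complex_of_real c * cinner v (P (S v))"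
    using c by (simp add: S_def bounded_op_scaleC[OF bP] cinner_scaleC_right)
  have "Re (cinner v (P (Q v))) \<le> c * cmod (cinner v (P (S v)))"
    using complex_Re_le_cmod[of "cinner v (P (Q v))"] c by (simp add: PSv norm_mult)
  also have "\<dots> \<le> c * Re (cinner v (P v))"
    using pos_op_commuting_contraction[OF P pos_op_self_adjoint[OF S] PS S_contr] c by simp
  finally show "Re (cinner v (P (Q v))) \<le> c * Re (cinner v (P v))" .
  show "0 \<le> Re (cinner v (P (Q v)))"
    using pos_op_commuting_contraction_nonneg[OF P S PS S_contr, of v] c by (simp add: PSv)
  have "cinner v (P (Q v)) = cinner (Q (P v)) v"
    by (simp add: pos_op_self_adjoint[OF P] pos_op_self_adjoint[OF Q])
  also have "\<dots> = cnj (cinner v (P (Q v)))" by (simp add: comm[symmetric] cinner_commute[of _ v])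
  finally show "Im (cinner v (P (Q v))) = 0" by (simp add: complex_eq_iff)
qed

section \<open>Extensions from dense subspaces\<close>

lemma bounded_additive_uniformly_continuous_on:
  fixes L :: "'a::real_normed_vector \<Rightarrow> 'b::real_normed_vector"
  assumes Dadd: "\<And>u v. u \<in> D \<Longrightarrow> v \<in> D \<Longrightarrow> u + v \<in> D" and Dneg: "\<And>u. u \<in> D \<Longrightarrow> - u \<in> D"
    and Ladd: "\<And>u v. u \<in> D \<Longrightarrow> v \<in> D \<Longrightarrow> L (u + v) = L u + L v"
    and Lb: "\<And>u. u \<in> D \<Longrightarrow> norm (L u) \<le> K * norm u" and K: "K \<ge> 0"
  shows "uniformly_continuous_on D L"
  unfolding uniformly_continuous_on_def
proof (intro allI impI)
  fix e :: real assume e: "e > 0"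
  have Ldiff: "L (u - v) = L u - L v" if "u \<in> D" "v \<in> D" for u v
  proof -
    have "u - v \<in> D" using Dadd[OF that(1) Dneg[OF that(2)]] by simp
    then have "L (u - v) + L v = L u" using Ladd[of "u - v" v] that by simp
    then show ?thesis by (simp add: eq_diff_eq)
  qed
  have "dist (L x') (L x) < e" if "x \<in> D" "x' \<in> D" "dist x' x < e / (K + 1)" for x x'
  proof -
    have "dist (L x') (L x) = norm (L (x' - x))" using that by (simp add: dist_norm Ldiff)
    also have "\<dots> \<le> K * norm (x' - x)" using Lb Dadd Dneg that by (metis diff_conv_add_uminus)
    also have "\<dots> \<le> (K + 1) * norm (x' - x)" by (simp add: mult_right_mono)
    also have "\<dots> < e" using that K by (simp add: dist_norm pos_less_divide_eq mult.commute)
    finally show ?thesis .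
  qed
  moreover have "e / (K + 1) > 0" using e K by simp
  ultimately show "\<exists>d>0. \<forall>x\<in>D. \<forall>x'\<in>D. dist x' x < d \<longrightarrow> dist (L x') (L x) < e" by blast
qed

lemma additive_extension_from_dense:
  fixes L :: "'a::real_normed_vector \<Rightarrow> 'b::{real_normed_vector,complete_space}"
  assumes dense: "closure D = UNIV"
    and Dadd: "\<And>u v. u \<in> D \<Longrightarrow> v \<in> D \<Longrightarrow> u + v \<in> D" and Dneg: "\<And>u. u \<in> D \<Longrightarrow> - u \<in> D"
    and Ladd: "\<And>u v. u \<in> D \<Longrightarrow> v \<in> D \<Longrightarrow> L (u + v) = L u + L v"
    and Lb: "\<And>u. u \<in> D \<Longrightarrow> norm (L u) \<le> K * norm u" and K: "K \<ge> 0"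
  obtains F where "continuous_on UNIV F" "\<And>u. u \<in> D \<Longrightarrow> F u = L u"
    "\<And>x y. F (x + y) = F x + F y" "\<And>x. norm (F x) \<le> K * norm x"
proof -
  note uc = bounded_additive_uniformly_continuous_on[OF Dadd Dneg Ladd Lb K]
  obtain g where g1: "uniformly_continuous_on (closure D) g" and g2: "\<And>x. x \<in> D \<Longrightarrow> L x = g x"
    using uniformly_continuous_on_extension_on_closure[OF uc] by metis
  have gc: "continuous_on UNIV g" using g1 dense uniformly_continuous_imp_continuous by metis
  have shift: "continuous_on UNIV (\<lambda>x. g (x + y))" for y
    by (rule continuous_on_compose2[OF gc]) (auto intro!: continuous_intros)
  have add1: "g (x + y) = g x + g y" if "y \<in> D" for x y
    by (rule dense_continuous_eq[OF dense shift[of y]])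
      (auto intro!: continuous_intros gc simp: g2[symmetric] Ladd Dadd that)
  have add: "g (x + y) = g x + g y" for x y
    by (rule dense_continuous_eq[OF dense, of "\<lambda>y. g (x + y)" "\<lambda>y. g x + g y"])
       (auto intro!: continuous_intros gc continuous_on_compose2[OF gc] simp: add1)
  have bd: "norm (g x) \<le> K * norm x" for x
    by (rule dense_continuous_le[OF dense])
      (auto intro!: continuous_intros continuous_on_compose2[OF gc] simp: g2[symmetric] Lb)
  show ?thesis using that[OF gc g2[symmetric] add bd] by simp
qed

lemma dense_functional_representation:
  fixes f :: "'h::complex_hilbert \<Rightarrow> complex"
  assumes dense: "closure D = UNIV" and Dadd: "\<And>u v. u \<in> D \<Longrightarrow> v \<in> D \<Longrightarrow> u + v \<in> D"
    and Dsc: "\<And>c u. u \<in> D \<Longrightarrow> scaleC c u \<in> D"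
    and fadd: "\<And>u v. u \<in> D \<Longrightarrow> v \<in> D \<Longrightarrow> f (u + v) = f u + f v"
    and fsc: "\<And>c u. u \<in> D \<Longrightarrow> f (scaleC c u) = c * f u"
    and fb: "\<And>u. u \<in> D \<Longrightarrow> cmod (f u) \<le> K * norm u" and K: "K \<ge> 0"
  shows "\<exists>w. (\<forall>u\<in>D. f u = cinner w u) \<and> norm w \<le> K"
proof -
  have Dneg: "- u \<in> D" if "u \<in> D" for u using Dsc[OF that, of "-1"] by (simp add: scaleC_minus1)
  obtain F where F: "continuous_on UNIV F" "\<And>u. u \<in> D \<Longrightarrow> F u = f u"
    "\<And>x y. F (x + y) = F x + F y" "\<And>x. norm (F x) \<le> K * norm x"
    using additive_extension_from_dense[OF dense Dadd Dneg fadd fb K] by metis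
  have Fsc: "F (scaleC c x) = c * F x" for c x
    by (rule dense_continuous_eq[OF dense, of "\<lambda>x. F (scaleC c x)" "\<lambda>x. c * F x"])
       (auto intro!: continuous_intros continuous_on_compose2[OF F(1) continuous_on_scaleC]
         simp: F(1) F(2) Dsc fsc)
  obtain w where w: "\<And>x. F x = cinner w x" using riesz_representation[OF F(3) Fsc F(4)] by metis
  have "norm w \<le> K"
    by (rule dense_cinner_bound_imp_norm_le[of UNIV]) (use K w F(4) in auto)
  then show ?thesis using w F(2) by metis
qed

lemma bounded_op_extension_from_dense:
  fixes L :: "'h::complex_hilbert \<Rightarrow> 'h"
  assumes dense: "closure D = UNIV" and Dadd: "\<And>u v. u \<in> D \<Longrightarrow> v \<in> D \<Longrightarrow> u + v \<in> D"
    and Dsc: "\<And>c u. u \<in> D \<Longrightarrow> scaleC c u \<in> D"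
    and Ladd: "\<And>u v. u \<in> D \<Longrightarrow> v \<in> D \<Longrightarrow> L (u + v) = L u + L v"
    and Lsc: "\<And>c u. u \<in> D \<Longrightarrow> L (scaleC c u) = scaleC c (L u)"
    and Lb: "\<And>u. u \<in> D \<Longrightarrow> norm (L u) \<le> K * norm u" and K: "K \<ge> 0"
  shows "\<exists>T. bounded_op T \<and> (\<forall>u\<in>D. T u = L u)"
proof -
  have Dneg: "- u \<in> D" if "u \<in> D" for u using Dsc[OF that, of "-1"] by (simp add: scaleC_minus1)
  obtain F where F: "continuous_on UNIV F" "\<And>u. u \<in> D \<Longrightarrow> F u = L u"
    "\<And>x y. F (x + y) = F x + F y" "\<And>x. norm (F x) \<le> K * norm x"
    using additive_extension_from_dense[OF dense Dadd Dneg Ladd Lb K] by metis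
  have Fsc: "F (scaleC c x) = scaleC c (F x)" for c x
    by (rule dense_continuous_eq[OF dense, of "\<lambda>x. F (scaleC c x)" "\<lambda>x. scaleC c (F x)"])
       (auto intro!: continuous_intros continuous_on_compose2[OF F(1) continuous_on_scaleC]
         continuous_on_compose2[OF continuous_on_scaleC F(1)] simp: F(1) F(2) Dsc Lsc)
  have "bounded_op F" unfolding bounded_op_def using F(3) Fsc F(4) by blast
  then show ?thesis using F(2) by blast
qed

lemma bounded_form_representation:
  fixes g :: "'h::complex_hilbert \<Rightarrow> 'h \<Rightarrow> complex"
  assumes dense: "closure D = UNIV" and Dadd: "\<And>u v. u \<in> D \<Longrightarrow> v \<in> D \<Longrightarrow> u + v \<in> D"
    and Dsc: "\<And>c u. u \<in> D \<Longrightarrow> scaleC c u \<in> D"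
    and g1: "\<And>u v w. u \<in> D \<Longrightarrow> v \<in> D \<Longrightarrow> w \<in> D \<Longrightarrow> g u (v + w) = g u v + g u w"
    and g2: "\<And>c u v. u \<in> D \<Longrightarrow> v \<in> D \<Longrightarrow> g u (scaleC c v) = c * g u v"
    and g3: "\<And>u v w. u \<in> D \<Longrightarrow> v \<in> D \<Longrightarrow> w \<in> D \<Longrightarrow> g (u + v) w = g u w + g v w"
    and g4: "\<And>c u v. u \<in> D \<Longrightarrow> v \<in> D \<Longrightarrow> g (scaleC c u) v = cnj c * g u v"
    and gb: "\<And>u v. u \<in> D \<Longrightarrow> v \<in> D \<Longrightarrow> cmod (g u v) \<le> K * norm u * norm v" and K: "K \<ge> 0"
  shows "\<exists>T. bounded_op T \<and> (\<forall>u\<in>D. \<forall>v\<in>D. cinner (T u) v = g u v)"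
proof -
  have "\<exists>w. (\<forall>v\<in>D. g u v = cinner w v) \<and> norm w \<le> K * norm u" if u: "u \<in> D" for u
    by (rule dense_functional_representation[OF dense Dadd Dsc]) (use u g1 g2 gb K in \<open>auto\<close>)
  then obtain L where L: "\<And>u v. u \<in> D \<Longrightarrow> v \<in> D \<Longrightarrow> g u v = cinner (L u) v"
    and Lb: "\<And>u. u \<in> D \<Longrightarrow> norm (L u) \<le> K * norm u" by metis
  have Ladd: "L (u + u') = L u + L u'" if "u \<in> D" "u' \<in> D" for u u'
    by (rule dense_cinner_eq_imp_eq[OF dense])
      (use that in \<open>simp add: L[symmetric] Dadd g3 cinner_add_left\<close>)
  have Lsc: "L (scaleC c u) = scaleC c (L u)" if "u \<in> D" for c u
    by (rule dense_cinner_eq_imp_eq[OF dense])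
      (use that in \<open>simp add: L[symmetric] Dsc g4 cinner_scaleC_left\<close>)
  obtain T where "bounded_op T" "\<forall>u\<in>D. T u = L u"
    using bounded_op_extension_from_dense[OF dense Dadd Dsc Ladd Lsc Lb K] by blast
  then show ?thesis using L by metis
qed

lemma vstate_adj_comp:
  "bounded_op X \<Longrightarrow> vstate \<zeta> (adj X \<circ> X) = complex_of_real ((norm (X \<zeta>))\<^sup>2)"
  by (simp add: vstate_def cinner_apply_adj[symmetric] cinner_self)

lemma vstate_adj_comp_lambda:
  "bounded_op X \<Longrightarrow> vstate \<zeta> (\<lambda>v. adj X (X v)) = complex_of_real ((norm (X \<zeta>))\<^sup>2)"
  by (simp add: vstate_def cinner_apply_adj[symmetric] cinner_self)

locale cyclic_separating =
  fixes M :: "('h::complex_hilbert \<Rightarrow> 'h) set" and \<zeta> :: 'h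
  assumes vN: "von_neumann_algebra M"
    and cyclic: "closure {a \<zeta> | a. a \<in> M} = UNIV"
    and separating: "\<forall>a\<in>M. a \<zeta> = 0 \<longrightarrow> a = (\<lambda>v. 0)"
begin

abbreviation Mc :: "('h \<Rightarrow> 'h) set" where "Mc \<equiv> commutant M"
abbreviation D :: "'h set" where "D \<equiv> {a \<zeta> | a. a \<in> M}"

lemma M_bounded_op: "a \<in> M \<Longrightarrow> bounded_op a"
  using vN by (simp add: von_neumann_algebra_def)

lemma M_adj: "a \<in> M \<Longrightarrow> adj a \<in> M"
  using vN by (simp add: von_neumann_algebra_def)

lemma bicommutant_eq: "commutant Mc = M"
  using vN by (simp add: von_neumann_algebra_def)

lemma Mc_bounded_op: "y \<in> Mc \<Longrightarrow> bounded_op y"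
  by (rule commutant_bounded_op)

lemma M_Mc_commute: "a \<in> M \<Longrightarrow> y \<in> Mc \<Longrightarrow> a (y v) = y (a v)"
  by (rule commutant_commute)

lemma M_ident: "(\<lambda>v. v) \<in> M"
  using ident_in_commutant[of Mc] bicommutant_eq by simp

lemma M_add: "a \<in> M \<Longrightarrow> b \<in> M \<Longrightarrow> (\<lambda>v. a v + b v) \<in> M"
  using commutant_add_op[of Mc a b] Mc_bounded_op bicommutant_eq by simp

lemma M_scale: "a \<in> M \<Longrightarrow> (\<lambda>v. scaleC c (a v)) \<in> M"
  using commutant_scale_op[of Mc a] Mc_bounded_op bicommutant_eq by simp

lemma M_comp: "a \<in> M \<Longrightarrow> b \<in> M \<Longrightarrow> (\<lambda>v. a (b v)) \<in> M"
  using commutant_comp_lambda[of a Mc b] bicommutant_eq by simp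

lemma M_diff: "a \<in> M \<Longrightarrow> b \<in> M \<Longrightarrow> (\<lambda>v. a v - b v) \<in> M"
  using commutant_diff_op[of Mc a b] Mc_bounded_op bicommutant_eq by simp

lemma M_adj_comp: "a \<in> M \<Longrightarrow> b \<in> M \<Longrightarrow> (\<lambda>v. adj a (b v)) \<in> M"
  by (rule M_comp[OF M_adj])

lemma Mc_ident: "(\<lambda>v. v) \<in> Mc"
  by (rule ident_in_commutant)

lemma Mc_add: "a \<in> Mc \<Longrightarrow> b \<in> Mc \<Longrightarrow> (\<lambda>v. a v + b v) \<in> Mc"
  using commutant_add_op M_bounded_op by blast

lemma Mc_scale: "a \<in> Mc \<Longrightarrow> (\<lambda>v. scaleC c (a v)) \<in> Mc"
  using commutant_scale_op M_bounded_op by blast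

lemma Mc_comp: "a \<in> Mc \<Longrightarrow> b \<in> Mc \<Longrightarrow> (a \<circ> b) \<in> Mc"
  by (rule commutant_comp)

lemma Mc_diff: "a \<in> Mc \<Longrightarrow> b \<in> Mc \<Longrightarrow> (\<lambda>v. a v - b v) \<in> Mc"
  using commutant_diff_op M_bounded_op by blast

lemma Mc_adj: "a \<in> Mc \<Longrightarrow> adj a \<in> Mc"
  by (rule adj_in_commutant) (use M_bounded_op M_adj in auto)

lemma D_add: "u \<in> D \<Longrightarrow> v \<in> D \<Longrightarrow> u + v \<in> D"
  using M_add by fastforce

lemma D_scale: "u \<in> D \<Longrightarrow> scaleC c u \<in> D"
  using M_scale by fastforce

lemma separating_eq:
  assumes "a \<in> M" "b \<in> M" "a \<zeta> = b \<zeta>"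
  shows "a = b"
proof -
  have "(\<lambda>v. a v - b v) = (\<lambda>v. 0)" using separating M_diff[OF assms(1,2)] assms(3) by auto
  then show ?thesis by (auto simp: fun_eq_iff dest: fun_cong)
qed

text \<open>\<open>\<zeta>\<close> is separating for the commutant too, because it is cyclic for \<open>M\<close>.\<close>

lemma Mc_separating_eq:
  assumes "T \<in> Mc" "T' \<in> Mc" "T \<zeta> = T' \<zeta>"
  shows "T = T'"
proof
  fix v
  show "T v = T' v"
  proof (rule dense_continuous_eq[OF cyclic, of T T'])
    show "continuous_on UNIV T" "continuous_on UNIV T'"
      using assms(1,2) by (simp_all add: bounded_op_continuous_on Mc_bounded_op)
    fix u assume "u \<in> D"
    then obtain a where a: "a \<in> M" "u = a \<zeta>" by blast
    show "T u = T' u"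
      using M_Mc_commute[OF a(1) assms(1)] M_Mc_commute[OF a(1) assms(2)] assms(3) a(2) by metis
  qed
qed

lemma cinner_cyclic_eq_imp_eq:
  assumes "\<And>a. a \<in> M \<Longrightarrow> cinner w (a \<zeta>) = cinner w' (a \<zeta>)"
  shows "w = w'"
  by (rule dense_cinner_eq_imp_eq[OF cyclic]) (use assms in blast)

lemma pos_op_if_pos_on_cyclic:
  assumes T: "bounded_op T"
    and on_D: "\<And>a. a \<in> M \<Longrightarrow>
      Im (cinner (a \<zeta>) (T (a \<zeta>))) = 0 \<and> 0 \<le> Re (cinner (a \<zeta>) (T (a \<zeta>)))"
  shows "pos_op T"
proof -
  have cont: "continuous_on UNIV (\<lambda>u. cinner u (T u))"
    by (rule continuous_on_cinner[OF continuous_on_id bounded_op_continuous_on[OF T]])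
  have "Im (cinner u (T u)) = 0" for u
    by (rule dense_continuous_eq[OF cyclic, of "\<lambda>u. Im (cinner u (T u))" "\<lambda>u. 0"])
       (use on_D in \<open>auto intro!: continuous_intros cont\<close>)
  moreover have "0 \<le> Re (cinner u (T u))" for u
    by (rule dense_continuous_le[OF cyclic, of "\<lambda>u. 0" "\<lambda>u. Re (cinner u (T u))"])
       (use on_D in \<open>auto intro!: continuous_intros cont\<close>)
  ultimately show ?thesis unfolding pos_op_def using T by blast
qed

end

section \<open>The dual map on the commutant\<close>

locale P_half_map = cyclic_separating M \<zeta> for M :: "('h::complex_hilbert \<Rightarrow> 'h) set" and \<zeta> :: 'h +
  fixes \<tau> :: "('h \<Rightarrow> 'h) \<Rightarrow> ('h \<Rightarrow> 'h)"
  assumes P_half: "P_half \<zeta> M \<tau>"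
begin

lemma tau_in_M: "a \<in> M \<Longrightarrow> \<tau> a \<in> M"
  using P_half by (simp add: P_half_def)

lemma tau_add: "a \<in> M \<Longrightarrow> b \<in> M \<Longrightarrow> \<tau> (\<lambda>v. a v + b v) = (\<lambda>v. \<tau> a v + \<tau> b v)"
  using P_half by (simp add: P_half_def)

lemma tau_scale: "a \<in> M \<Longrightarrow> \<tau> (\<lambda>v. scaleC c (a v)) = (\<lambda>v. scaleC c (\<tau> a v))"
  using P_half by (simp add: P_half_def)

lemma tau_pos: "a \<in> M \<Longrightarrow> pos_op a \<Longrightarrow> pos_op (\<tau> a)"
  using P_half by (simp add: P_half_def)

lemma tau_vstate_le: "a \<in> M \<Longrightarrow> pos_op a \<Longrightarrow> Re (vstate \<zeta> (\<tau> a)) \<le> Re (vstate \<zeta> a)"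
  using P_half by (simp add: P_half_def)

lemma tau_ident_le: "op_le (\<tau> id) id"
  using P_half by (simp add: P_half_def)

lemma norm_tau_le:
  assumes "a \<in> M"
  shows "norm (\<tau> a \<zeta>) \<le> norm (a \<zeta>)"
proof -
  have "Re (vstate \<zeta> (adj (\<tau> a) \<circ> \<tau> a)) \<le> Re (vstate \<zeta> (adj a \<circ> a))"
    using P_half assms by (simp add: P_half_def)
  then have "(norm (\<tau> a \<zeta>))\<^sup>2 \<le> (norm (a \<zeta>))\<^sup>2"
    by (simp add: vstate_adj_comp M_bounded_op tau_in_M assms)
  then show ?thesis by (rule power2_le_imp_le) simp
qed

text \<open>For \<open>y \<in> M'\<close> the dual map is defined through \<open>\<langle>\<tau>'(y) a\<zeta>, b\<zeta>\<rangle> = \<langle>y\<zeta>, \<tau>(a\<^sup>* b)\<zeta>\<rangle>\<close>;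
for \<open>a = 1\<close> this is the required duality.\<close>

definition tform :: "('h \<Rightarrow> 'h) \<Rightarrow> ('h \<Rightarrow> 'h) \<Rightarrow> ('h \<Rightarrow> 'h) \<Rightarrow> complex" where
  "tform y a b = cinner (y \<zeta>) (\<tau> (\<lambda>v. adj a (b v)) \<zeta>)"

lemma tform_add_right:
  assumes "a \<in> M" "b \<in> M" "b' \<in> M"
  shows "tform y a (\<lambda>v. b v + b' v) = tform y a b + tform y a b'"
proof -
  have "(\<lambda>v. adj a (b v + b' v)) = (\<lambda>v. adj a (b v) + adj a (b' v))"
    by (simp add: bounded_op_add[OF bounded_op_adj[OF M_bounded_op[OF assms(1)]]])
  then show ?thesis
    unfolding tform_def using assms by (simp add: tau_add M_adj_comp cinner_add_right)
qed

lemma tform_scale_right: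
  assumes "a \<in> M" "b \<in> M"
  shows "tform y a (\<lambda>v. scaleC c (b v)) = c * tform y a b"
proof -
  have "(\<lambda>v. adj a (scaleC c (b v))) = (\<lambda>v. scaleC c (adj a (b v)))"
    by (simp add: bounded_op_scaleC[OF bounded_op_adj[OF M_bounded_op[OF assms(1)]]])
  then show ?thesis
    unfolding tform_def using assms by (simp add: tau_scale M_adj_comp cinner_scaleC_right)
qed

lemma tform_add_left:
  assumes "a \<in> M" "a' \<in> M" "b \<in> M"
  shows "tform y (\<lambda>v. a v + a' v) b = tform y a b + tform y a' b"
  unfolding tform_def using assms
  by (simp add: adj_add_op M_bounded_op tau_add M_adj_comp cinner_add_right)

lemma tform_scale_left:
  assumes "a \<in> M" "b \<in> M"
  shows "tform y (\<lambda>v. scaleC c (a v)) b = cnj c * tform y a b"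
proof -
  have "(\<lambda>v. adj (\<lambda>v. scaleC c (a v)) (b v)) = (\<lambda>v. scaleC (cnj c) (adj a (b v)))"
    by (simp add: adj_scale_op M_bounded_op assms)
  then show ?thesis
    unfolding tform_def using assms by (simp add: tau_scale M_adj_comp cinner_scaleC_right)
qed

lemma tform_comp:
  assumes "x \<in> M" "a \<in> M" "b \<in> M"
  shows "tform y (\<lambda>v. x (a v)) b = tform y a (\<lambda>v. adj x (b v))"
  unfolding tform_def using assms by (simp add: adj_comp_lambda M_bounded_op)

lemma tform_ident: "tform y (\<lambda>v. v) x = cinner (y \<zeta>) (\<tau> x \<zeta>)"
  unfolding tform_def by (simp add: adj_ident)

lemma tform_pos:
  assumes y: "pos_op y" "y \<in> Mc" and c: "c > 0" "\<And>v. norm (y v) \<le> c * norm v" and a: "a \<in> M"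
  shows "Im (tform y a a) = 0" "0 \<le> Re (tform y a a)" "Re (tform y a a) \<le> c * (norm (a \<zeta>))\<^sup>2"
proof -
  define P where "P = \<tau> (\<lambda>v. adj a (a v))"
  have a_square: "(\<lambda>v. adj a (a v)) \<in> M" "pos_op (\<lambda>v. adj a (a v))"
    using M_adj_comp[OF a a] pos_op_adj_comp[OF M_bounded_op[OF a]] .
  have P_comm: "P (y v) = y (P v)" for v
    unfolding P_def by (rule M_Mc_commute[OF tau_in_M[OF a_square(1)] y(2)])
  have tform_eq: "tform y a a = cinner \<zeta> (P (y \<zeta>))"
    unfolding tform_def P_def[symmetric] by (simp add: pos_op_self_adjoint[OF y(1)] P_comm)
  have "pos_op P" unfolding P_def by (rule tau_pos[OF a_square])
  note product = pos_op_commuting_product[OF this y(1) P_comm c, of \<zeta>]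
  show "Im (tform y a a) = 0" "0 \<le> Re (tform y a a)" unfolding tform_eq by (fact product(1,2))+
  have "Re (cinner \<zeta> (P \<zeta>)) \<le> Re (vstate \<zeta> (\<lambda>v. adj a (a v)))"
    using tau_vstate_le[OF a_square] by (simp add: P_def vstate_def)
  also have "\<dots> = (norm (a \<zeta>))\<^sup>2" by (simp add: vstate_adj_comp_lambda M_bounded_op a)
  finally have "c * Re (cinner \<zeta> (P \<zeta>)) \<le> c * (norm (a \<zeta>))\<^sup>2" using c(1) by simp
  then show "Re (tform y a a) \<le> c * (norm (a \<zeta>))\<^sup>2" using product(3) tform_eq by simp
qed

lemma tform_cauchy_schwarz:
  assumes y: "pos_op y" "y \<in> Mc" and c: "c > 0" "\<And>v. norm (y v) \<le> c * norm v"
    and a: "a \<in> M" and b: "b \<in> M"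
  shows "cmod (tform y a b) \<le> c * norm (a \<zeta>) * norm (b \<zeta>)"
proof -
  have tb: "(\<lambda>v. scaleC t (b v)) \<in> M" for t by (rule M_scale[OF b])
  have ab: "(\<lambda>v. a v + scaleC t (b v)) \<in> M" for t by (rule M_add[OF a tb])
  have expand: "tform y (\<lambda>v. a v + scaleC t (b v)) (\<lambda>v. a v + scaleC t (b v)) =
      tform y a a + t * tform y a b + cnj t * tform y b a + cnj t * t * tform y b b" for t
  proof -
    have "tform y (\<lambda>v. a v + scaleC t (b v)) (\<lambda>v. a v + scaleC t (b v)) =
        tform y a (\<lambda>v. a v + scaleC t (b v)) + cnj t * tform y b (\<lambda>v. a v + scaleC t (b v))"
      by (simp only: tform_add_left[OF a tb ab] tform_scale_left[OF b ab])
    also have "\<dots> = (tform y a a + t * tform y a b) + cnj t * (tform y b a + t * tform y b b)"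
      by (simp only: tform_add_right[OF a a tb] tform_add_right[OF b a tb]
          tform_scale_right[OF a b] tform_scale_right[OF b b])
    finally show ?thesis by (simp add: distrib_left mult.assoc)
  qed
  have "Im (tform y (\<lambda>v. a v + scaleC t (b v)) (\<lambda>v. a v + scaleC t (b v))) = 0 \<and>
      0 \<le> Re (tform y (\<lambda>v. a v + scaleC t (b v)) (\<lambda>v. a v + scaleC t (b v)))" for t
    using tform_pos(1)[OF y c ab] tform_pos(2)[OF y c ab] by blast
  then have "(cmod (tform y a b))\<^sup>2 \<le> Re (tform y a a) * Re (tform y b b)"
    unfolding expand
    by (rule hermitian_form_cauchy_schwarz[OF _ tform_pos(1)[OF y c b] tform_pos(2)[OF y c b]])
  also have "\<dots> \<le> (c * (norm (a \<zeta>))\<^sup>2) * (c * (norm (b \<zeta>))\<^sup>2)"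
    using tform_pos[OF y c a] tform_pos[OF y c b] by (intro mult_mono) auto
  also have "\<dots> = (c * norm (a \<zeta>) * norm (b \<zeta>))\<^sup>2" by (simp add: power2_eq_square algebra_simps)
  finally show ?thesis by (rule power2_le_imp_le) (use c in simp)
qed

definition dual_of :: "('h \<Rightarrow> 'h) \<Rightarrow> ('h \<Rightarrow> 'h) \<Rightarrow> bool" where
  "dual_of T y \<longleftrightarrow> (\<forall>x\<in>M. cinner (T \<zeta>) (x \<zeta>) = cinner (y \<zeta>) (\<tau> x \<zeta>))"

lemma tform_representation:
  assumes y: "pos_op y" "y \<in> Mc"
  obtains T where "bounded_op T"
    "\<And>a b. a \<in> M \<Longrightarrow> b \<in> M \<Longrightarrow> cinner (T (a \<zeta>)) (b \<zeta>) = tform y a b"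
proof -
  obtain c where c: "c > 0" "\<And>v. norm (y v) \<le> c * norm v"
    using bounded_op_bound[OF Mc_bounded_op[OF y(2)]] by blast
  text \<open>Since \<open>\<zeta>\<close> is separating, every vector of \<open>D\<close> is \<open>a \<zeta>\<close> for a unique \<open>a \<in> M\<close>.\<close>
  define op_of where "op_of u = (SOME a. a \<in> M \<and> a \<zeta> = u)" for u
  have op_of: "op_of (a \<zeta>) = a" if a: "a \<in> M" for a
  proof -
    have "\<exists>b. b \<in> M \<and> b \<zeta> = a \<zeta>" using a by blast
    then have "op_of (a \<zeta>) \<in> M \<and> op_of (a \<zeta>) \<zeta> = a \<zeta>" unfolding op_of_def by (rule someI_ex)
    then show ?thesis using a by (intro separating_eq) auto
  qed
  define g where "g u v = tform y (op_of u) (op_of v)" for u v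
  have g: "g (a \<zeta>) (b \<zeta>) = tform y a b" if "a \<in> M" "b \<in> M" for a b
    using that by (simp add: g_def op_of)
  have "\<exists>T. bounded_op T \<and> (\<forall>u\<in>D. \<forall>v\<in>D. cinner (T u) v = g u v)"
  proof (rule bounded_form_representation[OF cyclic D_add D_scale, where K=c])
    fix u v w assume "u \<in> D" "v \<in> D" "w \<in> D"
    then obtain a b b' where ab: "a \<in> M" "b \<in> M" "b' \<in> M" "u = a \<zeta>" "v = b \<zeta>" "w = b' \<zeta>"
      by blast
    have "g u (v + w) = g (a \<zeta>) ((\<lambda>x. b x + b' x) \<zeta>)" using ab by simp
    also have "\<dots> = tform y a (\<lambda>x. b x + b' x)" by (rule g[OF ab(1) M_add[OF ab(2,3)]])
    also have "\<dots> = tform y a b + tform y a b'" by (rule tform_add_right[OF ab(1-3)])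
    finally show "g u (v + w) = g u v + g u w" using ab g by simp
    have "g (u + v) w = g ((\<lambda>x. a x + b x) \<zeta>) (b' \<zeta>)" using ab by simp
    also have "\<dots> = tform y (\<lambda>x. a x + b x) b'" by (rule g[OF M_add[OF ab(1,2)] ab(3)])
    also have "\<dots> = tform y a b' + tform y b b'" by (rule tform_add_left[OF ab(1-3)])
    finally show "g (u + v) w = g u w + g v w" using ab g by simp
  next
    fix k u v assume "u \<in> D" "v \<in> D"
    then obtain a b where ab: "a \<in> M" "b \<in> M" "u = a \<zeta>" "v = b \<zeta>" by blast
    have "g u (scaleC k v) = g (a \<zeta>) ((\<lambda>x. scaleC k (b x)) \<zeta>)" using ab by simp
    also have "\<dots> = tform y a (\<lambda>x. scaleC k (b x))" by (rule g[OF ab(1) M_scale[OF ab(2)]])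
    also have "\<dots> = k * tform y a b" by (rule tform_scale_right[OF ab(1,2)])
    finally show "g u (scaleC k v) = k * g u v" using ab g by simp
    have "g (scaleC k u) v = g ((\<lambda>x. scaleC k (a x)) \<zeta>) (b \<zeta>)" using ab by simp
    also have "\<dots> = tform y (\<lambda>x. scaleC k (a x)) b" by (rule g[OF M_scale[OF ab(1)] ab(2)])
    also have "\<dots> = cnj k * tform y a b" by (rule tform_scale_left[OF ab(1,2)])
    finally show "g (scaleC k u) v = cnj k * g u v" using ab g by simp
  next
    fix u v assume "u \<in> D" "v \<in> D"
    then obtain a b where ab: "a \<in> M" "b \<in> M" "u = a \<zeta>" "v = b \<zeta>" by blast
    show "cmod (g u v) \<le> c * norm u * norm v"
      using ab tform_cauchy_schwarz[OF y c ab(1,2)] by (simp add: g)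
  next
    show "0 \<le> c" using c(1) by simp
  qed
  then obtain T where T: "bounded_op T" "\<And>u v. u \<in> D \<Longrightarrow> v \<in> D \<Longrightarrow> cinner (T u) v = g u v"
    by blast
  show thesis
  proof (rule that[OF T(1)])
    fix a b assume ab: "a \<in> M" "b \<in> M"
    then have "a \<zeta> \<in> D" "b \<zeta> \<in> D" by blast+
    then show "cinner (T (a \<zeta>)) (b \<zeta>) = tform y a b" using T(2) g[OF ab] by simp
  qed
qed

lemma tform_representation_in_commutant:
  assumes T: "bounded_op T"
    and T_tform: "\<And>a b. a \<in> M \<Longrightarrow> b \<in> M \<Longrightarrow> cinner (T (a \<zeta>)) (b \<zeta>) = tform y a b"
  shows "T \<in> Mc"
proof (rule commutantI[OF T])
  fix x v assume x: "x \<in> M"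
  have x_bounded: "bounded_op x" by (rule M_bounded_op[OF x])
  have on_D: "x (T (a \<zeta>)) = T (x (a \<zeta>))" if a: "a \<in> M" for a
  proof (rule cinner_cyclic_eq_imp_eq)
    fix b assume b: "b \<in> M"
    have "cinner (x (T (a \<zeta>))) (b \<zeta>) = cinner (T (a \<zeta>)) ((\<lambda>v. adj x (b v)) \<zeta>)"
      by (simp add: cinner_apply_adj[OF x_bounded])
    also have "\<dots> = tform y a (\<lambda>v. adj x (b v))" by (rule T_tform[OF a M_adj_comp[OF x b]])
    also have "\<dots> = tform y (\<lambda>v. x (a v)) b" by (rule tform_comp[OF x a b, symmetric])
    also have "\<dots> = cinner (T ((\<lambda>v. x (a v)) \<zeta>)) (b \<zeta>)"
      by (rule T_tform[OF M_comp[OF x a] b, symmetric])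
    finally show "cinner (x (T (a \<zeta>))) (b \<zeta>) = cinner (T (x (a \<zeta>))) (b \<zeta>)" by simp
  qed
  show "x (T v) = T (x v)"
  proof (rule dense_continuous_eq[OF cyclic, of "\<lambda>v. x (T v)" "\<lambda>v. T (x v)"])
    show "continuous_on UNIV (\<lambda>v. x (T v))" "continuous_on UNIV (\<lambda>v. T (x v))"
      using bounded_op_continuous_on[OF bounded_op_comp[OF x_bounded T]]
        bounded_op_continuous_on[OF bounded_op_comp[OF T x_bounded]] by (simp_all add: comp_def)
  qed (use on_D in blast)
qed

lemma dual_of_pos_exists:
  assumes y: "pos_op y" "y \<in> Mc"
  shows "\<exists>T\<in>Mc. dual_of T y \<and> (\<forall>a\<in>M. cinner (T (a \<zeta>)) (a \<zeta>) = tform y a a)"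
proof -
  obtain T where T: "bounded_op T" "\<And>a b. a \<in> M \<Longrightarrow> b \<in> M \<Longrightarrow> cinner (T (a \<zeta>)) (b \<zeta>) = tform y a b"
    using tform_representation[OF y] by blast
  have "dual_of T y"
    unfolding dual_of_def using T(2)[OF M_ident] by (simp add: tform_ident)
  then show ?thesis using tform_representation_in_commutant[OF T] T(2) by blast
qed

definition has_dual :: "('h \<Rightarrow> 'h) \<Rightarrow> bool" where
  "has_dual y \<longleftrightarrow> (\<exists>T\<in>Mc. dual_of T y)"

lemma has_dual_add:
  assumes "has_dual y1" "has_dual y2"
  shows "has_dual (\<lambda>v. y1 v + y2 v)"
proof -
  obtain T1 T2 where T: "T1 \<in> Mc" "T2 \<in> Mc" "dual_of T1 y1" "dual_of T2 y2"
    using assms has_dual_def by metis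
  have "dual_of (\<lambda>v. T1 v + T2 v) (\<lambda>v. y1 v + y2 v)"
    using T(3,4) by (simp add: dual_of_def cinner_add_left)
  then show ?thesis unfolding has_dual_def using Mc_add[OF T(1,2)] by blast
qed

lemma has_dual_scale:
  assumes "has_dual y"
  shows "has_dual (\<lambda>v. scaleC c (y v))"
proof -
  obtain T where T: "T \<in> Mc" "dual_of T y" using assms has_dual_def by metis
  have "dual_of (\<lambda>v. scaleC c (T v)) (\<lambda>v. scaleC c (y v))"
    using T(2) by (simp add: dual_of_def cinner_scaleC_left)
  then show ?thesis unfolding has_dual_def using Mc_scale[OF T(1)] by blast
qed

lemma has_dual_pos: "pos_op y \<Longrightarrow> y \<in> Mc \<Longrightarrow> has_dual y"
  using dual_of_pos_exists unfolding has_dual_def by blast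

text \<open>A self-adjoint \<open>y\<close> is the difference of the positive operators \<open>y + K\<close> and \<open>K\<close>,
where \<open>K\<close> is a bound for \<open>y\<close>.\<close>

lemma has_dual_self_adjoint: assumes y: "y \<in> Mc" and sa: "\<And>x z. cinner (y x) z = cinner x (y z)"
  shows "has_dual y"
proof -
  obtain K where K: "K > 0" "\<And>v. norm (y v) \<le> K * norm v"
    using bounded_op_bound Mc_bounded_op[OF y] by blast
  define q :: "'h \<Rightarrow> 'h" where "q = (\<lambda>v. scaleC (complex_of_real K) v)"
  define p :: "'h \<Rightarrow> 'h" where "p = (\<lambda>v. y v + q v)"
  have qMc: "q \<in> Mc" unfolding q_def using Mc_scale[OF Mc_ident] by simp
  have pMc: "p \<in> Mc" unfolding p_def by (rule Mc_add[OF y qMc])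
  have qv: "cinner v (q v) = complex_of_real (K * (norm v)\<^sup>2)" for v
    by (simp add: q_def cinner_scaleC_right cinner_self)
  have qpos: "pos_op q" unfolding pos_op_def using Mc_bounded_op[OF qMc] K(1) by (simp add: qv)
  have ppos: "pos_op p" unfolding pos_op_def
  proof (intro conjI allI)
    show "bounded_op p" by (rule Mc_bounded_op[OF pMc])
    fix v
    have im: "Im (cinner v (y v)) = 0"
      using sa[of v v] cinner_commute[of "y v" v] by (simp add: complex_eq_iff)
    have "cmod (cinner v (y v)) \<le> norm v * (K * norm v)"
    proof -
      have "norm v * norm (y v) \<le> norm v * (K * norm v)"
        using K(2)[of v] by (simp add: mult_left_mono)
      then show ?thesis using cmod_cinner_le[of v "y v"] by linarith
    qed
    then have "- (K * (norm v)\<^sup>2) \<le> Re (cinner v (y v))"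
      using abs_Re_le_cmod[of "cinner v (y v)"] by (simp add: power2_eq_square algebra_simps)
    then show "Im (cinner v (p v)) = 0" "0 \<le> Re (cinner v (p v))"
      using im by (simp_all add: p_def cinner_add_right qv)
  qed
  have "y = (\<lambda>v. p v + scaleC (-1) (q v))" by (simp add: p_def scaleC_minus1)
  then show ?thesis
    using has_dual_add[OF has_dual_pos[OF ppos pMc] has_dual_scale[OF has_dual_pos[OF qpos qMc]]]
    by simp
qed

lemma has_dual_commutant: assumes y: "y \<in> Mc" shows "has_dual y"
proof -
  have yb: "bounded_op y" by (rule Mc_bounded_op[OF y])
  define h1 where "h1 = (\<lambda>v. y v + adj y v)"
  define h2 where "h2 = (\<lambda>v. scaleC \<i> (y v - adj y v))"
  have h1M: "h1 \<in> Mc" unfolding h1_def by (rule Mc_add[OF y Mc_adj[OF y]])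
  have h2M: "h2 \<in> Mc" unfolding h2_def by (rule Mc_scale[OF Mc_diff[OF y Mc_adj[OF y]]])
  have aa: "adj (adj y) = y" by (rule adj_adj[OF yb])
  have sa1: "cinner (h1 x) z = cinner x (h1 z)" for x z
    using cinner_apply_adj[OF bounded_op_adj[OF yb], of x z]
    by (simp add: h1_def cinner_add_left cinner_add_right cinner_apply_adj[OF yb] aa add.commute)
  have sa2: "cinner (h2 x) z = cinner x (h2 z)" for x z
    using cinner_apply_adj[OF bounded_op_adj[OF yb], of x z]
    by (simp add: h2_def cinner_scaleC_left cinner_scaleC_right cinner_diff_left cinner_diff_right
        cinner_apply_adj[OF yb] aa algebra_simps)
  have "y = (\<lambda>v. scaleC (1/2) (h1 v) + scaleC (- \<i> / 2) (h2 v))"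
  proof
    fix v
    have "scaleC (1/2) (h1 v) + scaleC (- \<i> / 2) (h2 v) =
        (scaleC (1/2) (y v) + scaleC (1/2) (y v)) +
        (scaleC (1/2) (adj y v) - scaleC (1/2) (adj y v))"
      by (simp add: h1_def h2_def scaleC_add_right scaleC_diff_right scaleC_scaleC)
    then show "y v = scaleC (1/2) (h1 v) + scaleC (- \<i> / 2) (h2 v)"
      using scaleC_add_left[of "1/2" "1/2" "y v"] by simp
  qed
  then show ?thesis
    using has_dual_add[OF has_dual_scale[OF has_dual_self_adjoint[OF h1M sa1]]
        has_dual_scale[OF has_dual_self_adjoint[OF h2M sa2]]]
    by simp
qed

definition dual_map :: "('h \<Rightarrow> 'h) \<Rightarrow> ('h \<Rightarrow> 'h)" where
  "dual_map y = (SOME T. T \<in> Mc \<and> dual_of T y)"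

lemma dual_map: assumes "y \<in> Mc" shows "dual_map y \<in> Mc" "dual_of (dual_map y) y"
proof -
  have "\<exists>T. T \<in> Mc \<and> dual_of T y" using has_dual_commutant[OF assms] has_dual_def by blast
  then have "dual_map y \<in> Mc \<and> dual_of (dual_map y) y" unfolding dual_map_def by (rule someI_ex)
  then show "dual_map y \<in> Mc" "dual_of (dual_map y) y" by auto
qed

lemma dual_of_unique: assumes "T \<in> Mc" "T' \<in> Mc" "dual_of T y" "dual_of T' y" shows "T = T'"
proof (rule Mc_separating_eq[OF assms(1,2)])
  show "T \<zeta> = T' \<zeta>" by (rule cinner_cyclic_eq_imp_eq) (use assms(3,4) in \<open>simp add: dual_of_def\<close>)
qed

lemma dual_map_eq: "y \<in> Mc \<Longrightarrow> T \<in> Mc \<Longrightarrow> dual_of T y \<Longrightarrow> dual_map y = T"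
  using dual_of_unique dual_map by blast


lemma dual_map_pos:
  assumes y: "pos_op y" "y \<in> Mc"
  shows "pos_op (dual_map y)" "\<And>a. a \<in> M \<Longrightarrow> cinner (dual_map y (a \<zeta>)) (a \<zeta>) = tform y a a"
proof -
  obtain T where T: "T \<in> Mc" "dual_of T y" "\<And>a. a \<in> M \<Longrightarrow> cinner (T (a \<zeta>)) (a \<zeta>) = tform y a a"
    using dual_of_pos_exists[OF y] by blast
  have dual_map_T: "dual_map y = T" by (rule dual_map_eq[OF y(2) T(1,2)])
  then show "cinner (dual_map y (a \<zeta>)) (a \<zeta>) = tform y a a" if "a \<in> M" for a
    using T(3)[OF that] by simp
  obtain c where c: "c > 0" "\<And>v. norm (y v) \<le> c * norm v"
    using bounded_op_bound[OF Mc_bounded_op[OF y(2)]] by blast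
  have "pos_op T"
  proof (rule pos_op_if_pos_on_cyclic[OF Mc_bounded_op[OF T(1)]])
    fix a assume a: "a \<in> M"
    have "cinner (a \<zeta>) (T (a \<zeta>)) = cnj (tform y a a)"
      using T(3)[OF a] cinner_commute[of "a \<zeta>" "T (a \<zeta>)"] by simp
    then show "Im (cinner (a \<zeta>) (T (a \<zeta>))) = 0 \<and> 0 \<le> Re (cinner (a \<zeta>) (T (a \<zeta>)))"
      using tform_pos(1,2)[OF y c a] by simp
  qed
  then show "pos_op (dual_map y)" by (simp add: dual_map_T)
qed

lemma dual_map_add:
  assumes "a \<in> Mc" "b \<in> Mc"
  shows "dual_map (\<lambda>v. a v + b v) = (\<lambda>v. dual_map a v + dual_map b v)"
proof (rule dual_map_eq)
  show "(\<lambda>v. a v + b v) \<in> Mc" by (rule Mc_add[OF assms])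
  show "(\<lambda>v. dual_map a v + dual_map b v) \<in> Mc"
    by (rule Mc_add[OF dual_map(1)[OF assms(1)] dual_map(1)[OF assms(2)]])
  show "dual_of (\<lambda>v. dual_map a v + dual_map b v) (\<lambda>v. a v + b v)"
    using dual_map(2)[OF assms(1)] dual_map(2)[OF assms(2)]
    by (simp add: dual_of_def cinner_add_left)
qed

lemma dual_map_scale:
  assumes "a \<in> Mc"
  shows "dual_map (\<lambda>v. scaleC c (a v)) = (\<lambda>v. scaleC c (dual_map a v))"
proof (rule dual_map_eq[OF Mc_scale[OF assms] Mc_scale[OF dual_map(1)[OF assms]]])
  show "dual_of (\<lambda>v. scaleC c (dual_map a v)) (\<lambda>v. scaleC c (a v))"
    using dual_map(2)[OF assms] by (simp add: dual_of_def cinner_scaleC_left)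
qed

text \<open>With \<open>x = 1\<close>, duality gives \<open>\<phi>(\<tau>'(y)) = \<langle>y\<zeta>, \<tau>(1)\<zeta>\<rangle>\<close>, and \<open>(1 - \<tau>(1)) y\<close> is a
product of commuting positive operators.\<close>

lemma dual_map_vstate_le:
  assumes y: "y \<in> Mc" "pos_op y"
  shows "Re (vstate \<zeta> (dual_map y)) \<le> Re (vstate \<zeta> y)"
proof -
  obtain c where c: "c > 0" "\<And>v. norm (y v) \<le> c * norm v"
    using bounded_op_bound[OF Mc_bounded_op[OF y(1)]] by blast
  define P where "P = (\<lambda>v. v - \<tau> (\<lambda>x. x) v)"
  have P: "pos_op P" using tau_ident_le unfolding op_le_def P_def id_def .
  have P_comm: "P (y v) = y (P v)" for v
    by (rule M_Mc_commute[OF _ y(1)]) (simp add: P_def M_diff M_ident tau_in_M)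
  have "0 \<le> Re (cinner \<zeta> (P (y \<zeta>)))" by (rule pos_op_commuting_product(2)[OF P y(2) P_comm c])
  also have "cinner \<zeta> (P (y \<zeta>)) = cinner (y \<zeta>) \<zeta> - cinner (y \<zeta>) (\<tau> (\<lambda>x. x) \<zeta>)"
    using M_Mc_commute[OF tau_in_M[OF M_ident] y(1)]
    by (simp add: P_def cinner_diff_right pos_op_self_adjoint[OF y(2), symmetric])
  also have "cinner (y \<zeta>) (\<tau> (\<lambda>x. x) \<zeta>) = cinner (dual_map y \<zeta>) \<zeta>"
    using bspec[OF dual_map(2)[OF y(1), unfolded dual_of_def] M_ident] by simp
  finally have "Re (cinner (dual_map y \<zeta>) \<zeta>) \<le> Re (cinner (y \<zeta>) \<zeta>)" by simp
  then show ?thesis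
    unfolding vstate_def
      using cinner_commute[of \<zeta> "dual_map y \<zeta>"] cinner_commute[of \<zeta> "y \<zeta>"] by simp
qed

lemma dual_map_ident_le: "op_le (dual_map id) id"
proof -
  have ident_pos: "pos_op (\<lambda>v::'h. v)" unfolding pos_op_def
    using bounded_op_ident by (simp add: cinner_self)
  define T where "T = dual_map (\<lambda>v. v)"
  have T_bounded: "bounded_op T" unfolding T_def
    by (rule Mc_bounded_op[OF dual_map(1)[OF Mc_ident]])
  have "pos_op (\<lambda>v. v - T v)"
  proof (rule pos_op_if_pos_on_cyclic[OF bounded_op_diff_op[OF bounded_op_ident T_bounded]])
    fix a assume a: "a \<in> M"
    have T_a: "cinner (T (a \<zeta>)) (a \<zeta>) = tform (\<lambda>v. v) a a"
      unfolding T_def by (rule dual_map_pos(2)[OF ident_pos Mc_ident a])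
    have "cinner (a \<zeta>) (a \<zeta> - T (a \<zeta>)) = complex_of_real ((norm (a \<zeta>))\<^sup>2) - cnj (tform (\<lambda>v. v) a a)"
      using T_a cinner_commute[of "a \<zeta>" "T (a \<zeta>)"] by (simp add: cinner_diff_right cinner_self)
    moreover note tform_pos[OF ident_pos Mc_ident zero_less_one _ a]
    ultimately show "Im (cinner (a \<zeta>) (a \<zeta> - T (a \<zeta>))) = 0 \<and> 0 \<le> Re (cinner (a \<zeta>) (a \<zeta> - T (a \<zeta>)))"
      by simp
  qed
  then show ?thesis unfolding op_le_def id_def T_def .
qed

lemma norm_dual_map_le:
  assumes a: "a \<in> Mc"
  shows "norm (dual_map a \<zeta>) \<le> norm (a \<zeta>)"
proof (rule dense_cinner_bound_imp_norm_le[OF cyclic])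
  fix v assume "v \<in> D"
  then obtain x where x: "x \<in> M" "v = x \<zeta>" by blast
  have "cmod (cinner (dual_map a \<zeta>) (x \<zeta>)) = cmod (cinner (a \<zeta>) (\<tau> x \<zeta>))"
    using dual_map(2)[OF a] x by (simp add: dual_of_def)
  also have "\<dots> \<le> norm (a \<zeta>) * norm (\<tau> x \<zeta>)" by (rule cmod_cinner_le)
  also have "\<dots> \<le> norm (a \<zeta>) * norm (x \<zeta>)"
    by (rule mult_left_mono[OF norm_tau_le[OF x(1)] norm_ge_zero])
  finally show "cmod (cinner (dual_map a \<zeta>) v) \<le> norm (a \<zeta>) * norm v" using x by simp
qed simp

lemma P_half_dual_map: "P_half \<zeta> Mc dual_map"
  unfolding P_half_def
proof (intro conjI ballI allI impI)
  show "dual_map a \<in> Mc" if "a \<in> Mc" for a by (rule dual_map(1)[OF that])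
  show "dual_map (\<lambda>v. a v + b v) = (\<lambda>v. dual_map a v + dual_map b v)" if "a \<in> Mc" "b \<in> Mc" for a b
    by (rule dual_map_add[OF that])
  show "dual_map (\<lambda>v. scaleC c (a v)) = (\<lambda>v. scaleC c (dual_map a v))" if "a \<in> Mc" for a c
    by (rule dual_map_scale[OF that])
  show "pos_op (dual_map y)" if "y \<in> Mc" "pos_op y" for y
    by (rule dual_map_pos(1)[OF that(2,1)])
  show "Re (vstate \<zeta> (dual_map y)) \<le> Re (vstate \<zeta> y)" if "y \<in> Mc" "pos_op y" for y
    by (rule dual_map_vstate_le[OF that])
  show "op_le (dual_map id) id" by (rule dual_map_ident_le)
  show "Re (vstate \<zeta> (adj (dual_map a) \<circ> dual_map a)) \<le> Re (vstate \<zeta> (adj a \<circ> a))" if "a \<in> Mc" for a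
  proof -
    have "(norm (dual_map a \<zeta>))\<^sup>2 \<le> (norm (a \<zeta>))\<^sup>2"
      by (intro power_mono norm_dual_map_le[OF that] norm_ge_zero)
    then show ?thesis
      using Mc_bounded_op[OF dual_map(1)[OF that]] Mc_bounded_op[OF that]
      by (simp add: vstate_adj_comp)
  qed
qed

end

lemma norm_apply_unit_le_onorm:
  assumes "bounded_op x" and "norm \<zeta> = 1"
  shows "norm (x \<zeta>) \<le> onorm x"
  using onorm[OF bounded_op_bounded_linear[OF assms(1)], of \<zeta>] assms(2) by simp

lemma (in cyclic_separating) dual_difference_estimate:
  assumes P1: "P_half \<zeta> M \<tau>1" and P2: "P_half \<zeta> M \<tau>2"
    and dual1: "\<forall>x\<in>M. \<forall>y\<in>Mc. cinner (\<tau>1' y \<zeta>) (x \<zeta>) = cinner (y \<zeta>) (\<tau>1 x \<zeta>)"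
    and dual2: "\<forall>x\<in>M. \<forall>y\<in>Mc. cinner (\<tau>2' y \<zeta>) (x \<zeta>) = cinner (y \<zeta>) (\<tau>2 x \<zeta>)"
    and unit: "norm \<zeta> = 1" and x: "x \<in> M" and y1: "y1 \<in> Mc" and y2: "y2 \<in> Mc"
  shows "norm (cinner (y1 \<zeta>) (\<tau>1 x (y2 \<zeta>) - \<tau>2 x (y2 \<zeta>)))
           \<le> norm (\<tau>1' (adj y2 \<circ> y1) \<zeta> - \<tau>2' (adj y2 \<circ> y1) \<zeta>) * norm (x \<zeta>)
       \<and> norm (\<tau>1' (adj y2 \<circ> y1) \<zeta> - \<tau>2' (adj y2 \<circ> y1) \<zeta>) * norm (x \<zeta>)
           \<le> norm (\<tau>1' (adj y2 \<circ> y1) \<zeta> - \<tau>2' (adj y2 \<circ> y1) \<zeta>) * onorm x"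
proof
  define w where "w = adj y2 \<circ> y1"
  have w: "w \<in> Mc" unfolding w_def by (rule Mc_comp[OF Mc_adj[OF y2] y1])
  have y2_bounded: "bounded_op y2" by (rule Mc_bounded_op[OF y2])
  have "\<tau>1 x \<in> M" "\<tau>2 x \<in> M" using P1 P2 x by (simp_all add: P_half_def)
  then have "cinner (y1 \<zeta>) (\<tau>1 x (y2 \<zeta>) - \<tau>2 x (y2 \<zeta>)) = cinner (y1 \<zeta>) (y2 (\<tau>1 x \<zeta> - \<tau>2 x \<zeta>))"
    using M_Mc_commute[OF _ y2] by (simp add: bounded_op_diff[OF y2_bounded])
  also have "\<dots> = cinner (w \<zeta>) (\<tau>1 x \<zeta> - \<tau>2 x \<zeta>)"
    by (simp add: w_def cinner_adj_apply[OF y2_bounded])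
  also have "\<dots> = cinner (\<tau>1' w \<zeta> - \<tau>2' w \<zeta>) (x \<zeta>)"
    using dual1 dual2 x w by (simp add: cinner_diff_right cinner_diff_left)
  finally show "norm (cinner (y1 \<zeta>) (\<tau>1 x (y2 \<zeta>) - \<tau>2 x (y2 \<zeta>)))
           \<le> norm (\<tau>1' (adj y2 \<circ> y1) \<zeta> - \<tau>2' (adj y2 \<circ> y1) \<zeta>) * norm (x \<zeta>)"
    unfolding w_def by (metis cmod_cinner_le)
  show "norm (\<tau>1' (adj y2 \<circ> y1) \<zeta> - \<tau>2' (adj y2 \<circ> y1) \<zeta>) * norm (x \<zeta>)
           \<le> norm (\<tau>1' (adj y2 \<circ> y1) \<zeta> - \<tau>2' (adj y2 \<circ> y1) \<zeta>) * onorm x"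
    by (intro mult_left_mono norm_apply_unit_le_onorm M_bounded_op x unit) simp
qed

theorem lemma2p1:
  fixes M :: "('h::complex_hilbert \<Rightarrow> 'h) set" and \<zeta> :: 'h
  assumes vN: "von_neumann_algebra M"
    and unit: "norm \<zeta> = 1"
    and cyclic: "closure {a \<zeta> | a. a \<in> M} = UNIV"
    and separating: "\<forall>a\<in>M. a \<zeta> = 0 \<longrightarrow> a = (\<lambda>v. 0)"
  shows "(\<forall>\<tau>. P_half \<zeta> M \<tau> \<longrightarrow>
            (\<exists>\<tau>'. P_half \<zeta> (commutant M) \<tau>' \<and>
               (\<forall>x\<in>M. \<forall>y\<in>commutant M. cinner (\<tau>' y \<zeta>) (x \<zeta>) = cinner (y \<zeta>) (\<tau> x \<zeta>))))
       \<and> (\<forall>\<tau>1 \<tau>2 \<tau>1' \<tau>2'. P_half \<zeta> M \<tau>1 \<and> P_half \<zeta> M \<tau>2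
            \<and> P_half \<zeta> (commutant M) \<tau>1' \<and> P_half \<zeta> (commutant M) \<tau>2'
            \<and> (\<forall>x\<in>M. \<forall>y\<in>commutant M. cinner (\<tau>1' y \<zeta>) (x \<zeta>) = cinner (y \<zeta>) (\<tau>1 x \<zeta>))
            \<and> (\<forall>x\<in>M. \<forall>y\<in>commutant M. cinner (\<tau>2' y \<zeta>) (x \<zeta>) = cinner (y \<zeta>) (\<tau>2 x \<zeta>))
          \<longrightarrow> (\<forall>x\<in>M. \<forall>y1\<in>commutant M. \<forall>y2\<in>commutant M.
                 norm (cinner (y1 \<zeta>) (\<tau>1 x (y2 \<zeta>) - \<tau>2 x (y2 \<zeta>)))
                   \<le> norm (\<tau>1' (adj y2 \<circ> y1) \<zeta> - \<tau>2' (adj y2 \<circ> y1) \<zeta>) * norm (x \<zeta>)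
               \<and> norm (\<tau>1' (adj y2 \<circ> y1) \<zeta> - \<tau>2' (adj y2 \<circ> y1) \<zeta>) * norm (x \<zeta>)
                   \<le> norm (\<tau>1' (adj y2 \<circ> y1) \<zeta> - \<tau>2' (adj y2 \<circ> y1) \<zeta>) * onorm x))"
proof -
  interpret cyclic_separating M \<zeta> using vN cyclic separating by unfold_locales
  have dual_exists: "\<exists>\<tau>'. P_half \<zeta> Mc \<tau>' \<and>
      (\<forall>x\<in>M. \<forall>y\<in>Mc. cinner (\<tau>' y \<zeta>) (x \<zeta>) = cinner (y \<zeta>) (\<tau> x \<zeta>))"
    if "P_half \<zeta> M \<tau>" for \<tau>
  proof -
    interpret P_half_map M \<zeta> \<tau> using that by unfold_locales
    show ?thesis using P_half_dual_map dual_map(2) unfolding dual_of_def by blast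
  qed
  show ?thesis
    using dual_exists dual_difference_estimate[OF _ _ _ _ unit] by blast
qed

end
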